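(* Let $\mathcal X$ be a linear Abelian category over a field $\mathbb F$ and let $L\subseteq\mathbb Z$ be any subset. Then the category of tempered $L$-persistence objects in $\mathcal X$ is Krull–Schmidt.
   Context: An additive category is linear over $\mathbb F$ if each Hom-set is a finite-dimensional $\mathbb F$-vector space and composition is bilinear. For $L\subseteq\mathbb Z$, an $L$-persistence object in $\mathcal X$ is a family of objects $(X_p)_{p\in\mathbb Z}$ together with, for each $p$, a morphism $X_p\to X_{p-1}$ if $p\in L$ and a morphism $X_{p-1}\to X_p$ if $p\notin L$. A morphism of $L$-persistence objects is a family of morphisms $f_p:X_p\to X'_p$ making all resulting squares commute. It is tempered if all but finitely many of its arrows are isomorphisms. An object is indecomposable if it is nonzero and not isomorphic to a direct sum of two nonzero objects. A ring is local if $1\ne0$ and for each $f$, if $f$ is not invertible then $1-f$ is invertible. An additive category is Krull–Schmidt if every object is isomorphic to a finite direct sum of indecomposables and every indecomposable has a local endomorphism ring. *)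

theory Defs
  imports Main
begin

text \<open>A (small) category presented by objects, morphisms, domain/codomain, composition
  and identities, together with F-linear structure on the Hom-sets.
  cComp C g f denotes g after f.\<close>

record ('o, 'm, 'k) lcat =
  cObj  :: "'o set"
  cMor  :: "'m set"
  cDom  :: "'m \<Rightarrow> 'o"
  cCod  :: "'m \<Rightarrow> 'o"
  cComp :: "'m \<Rightarrow> 'm \<Rightarrow> 'm"
  cId   :: "'o \<Rightarrow> 'm"
  cAdd  :: "'m \<Rightarrow> 'm \<Rightarrow> 'm"
  cZero :: "'o \<Rightarrow> 'o \<Rightarrow> 'm"
  cSmul :: "'k \<Rightarrow> 'm \<Rightarrow> 'm"

definition hom :: "('o, 'm, 'k) lcat \<Rightarrow> 'o \<Rightarrow> 'o \<Rightarrow> 'm set" where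
  "hom C X Y = {f \<in> cMor C. cDom C f = X \<and> cCod C f = Y}"

definition is_category :: "('o, 'm, 'k) lcat \<Rightarrow> bool" where
  "is_category C \<longleftrightarrow>
     (\<forall>f\<in>cMor C. cDom C f \<in> cObj C \<and> cCod C f \<in> cObj C) \<and>
     (\<forall>X\<in>cObj C. cId C X \<in> hom C X X) \<and>
     (\<forall>X\<in>cObj C. \<forall>Y\<in>cObj C. \<forall>Z\<in>cObj C. \<forall>f\<in>hom C X Y. \<forall>g\<in>hom C Y Z.
        cComp C g f \<in> hom C X Z) \<and>
     (\<forall>W\<in>cObj C. \<forall>X\<in>cObj C. \<forall>Y\<in>cObj C. \<forall>Z\<in>cObj C.
        \<forall>f\<in>hom C W X. \<forall>g\<in>hom C X Y. \<forall>h\<in>hom C Y Z.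
        cComp C h (cComp C g f) = cComp C (cComp C h g) f) \<and>
     (\<forall>X\<in>cObj C. \<forall>Y\<in>cObj C. \<forall>f\<in>hom C X Y.
        cComp C f (cId C X) = f \<and> cComp C (cId C Y) f = f)"

definition lin_comb :: "('o, 'm, 'k) lcat \<Rightarrow> 'o \<Rightarrow> 'o \<Rightarrow> 'm list \<Rightarrow> 'k list \<Rightarrow> 'm" where
  "lin_comb C X Y bs cs =
     foldr (\<lambda>(c, b) acc. cAdd C (cSmul C c b) acc) (zip cs bs) (cZero C X Y)"

definition linear_homs :: "('o, 'm, 'k::field) lcat \<Rightarrow> bool" where
  "linear_homs C \<longleftrightarrow> (\<forall>X\<in>cObj C. \<forall>Y\<in>cObj C.
     cZero C X Y \<in> hom C X Y \<and>
     (\<forall>f\<in>hom C X Y. \<forall>g\<in>hom C X Y. cAdd C f g \<in> hom C X Y) \<and>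
     (\<forall>a. \<forall>f\<in>hom C X Y. cSmul C a f \<in> hom C X Y) \<and>
     (\<forall>f\<in>hom C X Y. \<forall>g\<in>hom C X Y. \<forall>h\<in>hom C X Y.
        cAdd C (cAdd C f g) h = cAdd C f (cAdd C g h)) \<and>
     (\<forall>f\<in>hom C X Y. \<forall>g\<in>hom C X Y. cAdd C f g = cAdd C g f) \<and>
     (\<forall>f\<in>hom C X Y. cAdd C f (cZero C X Y) = f) \<and>
     (\<forall>f\<in>hom C X Y. cAdd C f (cSmul C (-1) f) = cZero C X Y) \<and>
     (\<forall>f\<in>hom C X Y. cSmul C 1 f = f) \<and>
     (\<forall>a b. \<forall>f\<in>hom C X Y. cSmul C a (cSmul C b f) = cSmul C (a * b) f) \<and>
     (\<forall>a b. \<forall>f\<in>hom C X Y. cSmul C (a + b) f = cAdd C (cSmul C a f) (cSmul C b f)) \<and>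
     (\<forall>a. \<forall>f\<in>hom C X Y. \<forall>g\<in>hom C X Y.
        cSmul C a (cAdd C f g) = cAdd C (cSmul C a f) (cSmul C a g)) \<and>
     (\<exists>bs. set bs \<subseteq> hom C X Y \<and>
        (\<forall>f\<in>hom C X Y. \<exists>cs. length cs = length bs \<and> f = lin_comb C X Y bs cs)))"

definition bilinear_comp :: "('o, 'm, 'k) lcat \<Rightarrow> bool" where
  "bilinear_comp C \<longleftrightarrow> (\<forall>X\<in>cObj C. \<forall>Y\<in>cObj C. \<forall>Z\<in>cObj C.
     \<forall>f\<in>hom C X Y. \<forall>f'\<in>hom C X Y. \<forall>g\<in>hom C Y Z. \<forall>g'\<in>hom C Y Z. \<forall>a.
       cComp C g (cAdd C f f') = cAdd C (cComp C g f) (cComp C g f') \<and>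
       cComp C (cAdd C g g') f = cAdd C (cComp C g f) (cComp C g' f) \<and>
       cComp C g (cSmul C a f) = cSmul C a (cComp C g f) \<and>
       cComp C (cSmul C a g) f = cSmul C a (cComp C g f))"

definition is_zero_obj :: "('o, 'm, 'k) lcat \<Rightarrow> 'o \<Rightarrow> bool" where
  "is_zero_obj C Z \<longleftrightarrow> Z \<in> cObj C \<and>
     (\<forall>X\<in>cObj C. (\<exists>!f. f \<in> hom C Z X) \<and> (\<exists>!f. f \<in> hom C X Z))"

definition biprod :: "('o, 'm, 'k) lcat \<Rightarrow> 'o \<Rightarrow> 'o \<Rightarrow> 'o \<Rightarrow> 'm \<Rightarrow> 'm \<Rightarrow> 'm \<Rightarrow> 'm \<Rightarrow> bool" where
  "biprod C A B S i1 i2 p1 p2 \<longleftrightarrow> A \<in> cObj C \<and> B \<in> cObj C \<and> S \<in> cObj C \<and>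
     i1 \<in> hom C A S \<and> i2 \<in> hom C B S \<and> p1 \<in> hom C S A \<and> p2 \<in> hom C S B \<and>
     cComp C p1 i1 = cId C A \<and> cComp C p2 i2 = cId C B \<and>
     cComp C p2 i1 = cZero C A B \<and> cComp C p1 i2 = cZero C B A \<and>
     cAdd C (cComp C i1 p1) (cComp C i2 p2) = cId C S"

definition additive :: "('o, 'm, 'k) lcat \<Rightarrow> bool" where
  "additive C \<longleftrightarrow> (\<exists>Z. is_zero_obj C Z) \<and>
     (\<forall>A\<in>cObj C. \<forall>B\<in>cObj C. \<exists>S i1 i2 p1 p2. biprod C A B S i1 i2 p1 p2)"

definition is_kernel :: "('o, 'm, 'k) lcat \<Rightarrow> 'm \<Rightarrow> 'm \<Rightarrow> bool" where
  "is_kernel C f k \<longleftrightarrow> f \<in> cMor C \<and> k \<in> cMor C \<and> cCod C k = cDom C f \<and>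
     cComp C f k = cZero C (cDom C k) (cCod C f) \<and>
     (\<forall>g\<in>cMor C. cCod C g = cDom C f \<and> cComp C f g = cZero C (cDom C g) (cCod C f) \<longrightarrow>
        (\<exists>!h. h \<in> hom C (cDom C g) (cDom C k) \<and> cComp C k h = g))"

definition is_cokernel :: "('o, 'm, 'k) lcat \<Rightarrow> 'm \<Rightarrow> 'm \<Rightarrow> bool" where
  "is_cokernel C f c \<longleftrightarrow> f \<in> cMor C \<and> c \<in> cMor C \<and> cDom C c = cCod C f \<and>
     cComp C c f = cZero C (cDom C f) (cCod C c) \<and>
     (\<forall>g\<in>cMor C. cDom C g = cCod C f \<and> cComp C g f = cZero C (cDom C f) (cCod C g) \<longrightarrow>
        (\<exists>!h. h \<in> hom C (cCod C c) (cCod C g) \<and> cComp C h c = g))"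

definition is_mono :: "('o, 'm, 'k) lcat \<Rightarrow> 'm \<Rightarrow> bool" where
  "is_mono C m \<longleftrightarrow> m \<in> cMor C \<and> (\<forall>g\<in>cMor C. \<forall>h\<in>cMor C.
     cCod C g = cDom C m \<and> cCod C h = cDom C m \<and> cDom C g = cDom C h \<and>
     cComp C m g = cComp C m h \<longrightarrow> g = h)"

definition is_epi :: "('o, 'm, 'k) lcat \<Rightarrow> 'm \<Rightarrow> bool" where
  "is_epi C e \<longleftrightarrow> e \<in> cMor C \<and> (\<forall>g\<in>cMor C. \<forall>h\<in>cMor C.
     cDom C g = cCod C e \<and> cDom C h = cCod C e \<and> cCod C g = cCod C h \<and>
     cComp C g e = cComp C h e \<longrightarrow> g = h)"

definition is_iso :: "('o, 'm, 'k) lcat \<Rightarrow> 'm \<Rightarrow> bool" where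
  "is_iso C f \<longleftrightarrow> f \<in> cMor C \<and> (\<exists>g\<in>hom C (cCod C f) (cDom C f).
     cComp C g f = cId C (cDom C f) \<and> cComp C f g = cId C (cCod C f))"

definition linear_abelian_cat :: "('o, 'm, 'k::field) lcat \<Rightarrow> bool" where
  "linear_abelian_cat C \<longleftrightarrow> is_category C \<and> linear_homs C \<and> bilinear_comp C \<and> additive C \<and>
     (\<forall>f\<in>cMor C. \<exists>k. is_kernel C f k) \<and>
     (\<forall>f\<in>cMor C. \<exists>c. is_cokernel C f c) \<and>
     (\<forall>m. is_mono C m \<longrightarrow> (\<exists>f. is_kernel C f m)) \<and>
     (\<forall>e. is_epi C e \<longrightarrow> (\<exists>f. is_cokernel C f e))"

type_synonym ('o, 'm) pobj = "(int \<Rightarrow> 'o) \<times> (int \<Rightarrow> 'm)"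
type_synonym ('o, 'm) pmor = "('o, 'm) pobj \<times> ('o, 'm) pobj \<times> (int \<Rightarrow> 'm)"

definition pers_obj :: "('o, 'm, 'k) lcat \<Rightarrow> int set \<Rightarrow> ('o, 'm) pobj \<Rightarrow> bool" where
  "pers_obj C L P \<longleftrightarrow> (\<forall>p. fst P p \<in> cObj C) \<and>
     (\<forall>p. snd P p \<in> (if p \<in> L then hom C (fst P p) (fst P (p - 1))
                               else hom C (fst P (p - 1)) (fst P p)))"

definition tempered :: "('o, 'm, 'k) lcat \<Rightarrow> ('o, 'm) pobj \<Rightarrow> bool" where
  "tempered C P \<longleftrightarrow> finite {p. \<not> is_iso C (snd P p)}"

definition pers_mor :: "('o, 'm, 'k) lcat \<Rightarrow> int set \<Rightarrow> ('o, 'm) pobj \<Rightarrow> ('o, 'm) pobj \<Rightarrow> (int \<Rightarrow> 'm) \<Rightarrow> bool" where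
  "pers_mor C L P Q f \<longleftrightarrow> (\<forall>p. f p \<in> hom C (fst P p) (fst Q p)) \<and>
     (\<forall>p. if p \<in> L then cComp C (f (p - 1)) (snd P p) = cComp C (snd Q p) (f p)
          else cComp C (f p) (snd P p) = cComp C (snd Q p) (f (p - 1)))"

definition tempered_pers_cat :: "('o, 'm, 'k) lcat \<Rightarrow> int set \<Rightarrow> (('o, 'm) pobj, ('o, 'm) pmor, 'k) lcat" where
  "tempered_pers_cat C L =
    \<lparr> cObj = {P. pers_obj C L P \<and> tempered C P},
      cMor = {(P, Q, f). pers_obj C L P \<and> tempered C P \<and> pers_obj C L Q \<and> tempered C Q \<and>
                          pers_mor C L P Q f},
      cDom = (\<lambda>m. fst m),
      cCod = (\<lambda>m. fst (snd m)),
      cComp = (\<lambda>(Q', R, g) (P, Q, f). (P, R, \<lambda>p. cComp C (g p) (f p))),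
      cId = (\<lambda>P. (P, P, \<lambda>p. cId C (fst P p))),
      cAdd = (\<lambda>(P, Q, f) (P', Q', g). (P, Q, \<lambda>p. cAdd C (f p) (g p))),
      cZero = (\<lambda>P Q. (P, Q, \<lambda>p. cZero C (fst P p) (fst Q p))),
      cSmul = (\<lambda>a (P, Q, f). (P, Q, \<lambda>p. cSmul C a (f p))) \<rparr>"

definition nbiprod :: "('o, 'm, 'k) lcat \<Rightarrow> (nat \<Rightarrow> 'o) \<Rightarrow> nat \<Rightarrow> 'o \<Rightarrow> (nat \<Rightarrow> 'm) \<Rightarrow> (nat \<Rightarrow> 'm) \<Rightarrow> bool" where
  "nbiprod D A n X \<iota> \<pi> \<longleftrightarrow> X \<in> cObj D \<and>
     (\<forall>k<n. A k \<in> cObj D \<and> \<iota> k \<in> hom D (A k) X \<and> \<pi> k \<in> hom D X (A k)) \<and>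
     (\<forall>j<n. \<forall>k<n. cComp D (\<pi> j) (\<iota> k) = (if j = k then cId D (A k) else cZero D (A k) (A j))) \<and>
     foldr (\<lambda>k acc. cAdd D (cComp D (\<iota> k) (\<pi> k)) acc) [0..<n] (cZero D X X) = cId D X"

definition indecomposable :: "('o, 'm, 'k) lcat \<Rightarrow> 'o \<Rightarrow> bool" where
  "indecomposable D X \<longleftrightarrow> X \<in> cObj D \<and> \<not> is_zero_obj D X \<and>
     \<not> (\<exists>A B i1 i2 p1 p2. \<not> is_zero_obj D A \<and> \<not> is_zero_obj D B \<and> biprod D A B X i1 i2 p1 p2)"

definition end_unit :: "('o, 'm, 'k) lcat \<Rightarrow> 'o \<Rightarrow> 'm \<Rightarrow> bool" where
  "end_unit D X f \<longleftrightarrow> (\<exists>g\<in>hom D X X. cComp D g f = cId D X \<and> cComp D f g = cId D X)"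

text \<open>The endomorphism ring (hom D X X, cAdd, cComp, cZero, cId) is local; 1 - f is
  cAdd (cId X) (cSmul (-1) f).\<close>
definition local_end :: "('o, 'm, 'k::ring_1) lcat \<Rightarrow> 'o \<Rightarrow> bool" where
  "local_end D X \<longleftrightarrow> cId D X \<noteq> cZero D X X \<and>
     (\<forall>f\<in>hom D X X. \<not> end_unit D X f \<longrightarrow>
        end_unit D X (cAdd D (cId D X) (cSmul D (-1) f)))"

definition krull_schmidt :: "('o, 'm, 'k::ring_1) lcat \<Rightarrow> bool" where
  "krull_schmidt D \<longleftrightarrow>
     (\<forall>X\<in>cObj D. \<exists>n A \<iota> \<pi>. (\<forall>k<n. indecomposable D (A k)) \<and> nbiprod D A n X \<iota> \<pi>) \<and>
     (\<forall>X. indecomposable D X \<longrightarrow> local_end D X)"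

end

theory Submission
  imports Defs "HOL-Library.Function_Algebras" "HOL-Computational_Algebra.Computational_Algebra"
begin

text \<open>
  Three properties of an F-linear category make it Krull--Schmidt: idempotents split, the
  number of nonzero pairwise orthogonal idempotents of an object is bounded, and every
  endomorphism is annihilated by a nonzero polynomial. Splitting a maximal complete family
  of orthogonal idempotents decomposes an object into indecomposables. For an indecomposable
  object, write an annihilating polynomial as \<open>x\<^sup>m Q\<close> with \<open>Q(0) \<noteq> 0\<close>; Bezout gives an
  idempotent polynomial in f, which is therefore 0 or 1, and accordingly f is invertible or
  nilpotent (Fitting's lemma), so the endomorphism ring is local.

  A linear Abelian category has all three properties (idempotents split via kernels, Hom
  spaces are finite-dimensional), and tempered persistence objects inherit them: outside a
  finite window of indices all structure maps are isomorphisms, so a morphism that vanishes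
  on the window vanishes everywhere, and bounds and annihilating polynomials need only be
  found on the finitely many components in the window.
\<close>

section \<open>Linear algebra and polynomials\<close>

lemma sum_fun_apply: "(sum g A) x = (\<Sum>a\<in>A. g a x)"
  by (induction A rule: infinite_finite_induct) auto

lemma nontrivial_relation_if_inj_supported_below:
  fixes w :: "nat \<Rightarrow> nat \<Rightarrow> 'k::field"
  assumes supp: "\<And>i j. i < n \<Longrightarrow> d \<le> j \<Longrightarrow> w i j = 0" and "d < n" and inj: "inj_on w {..<n}"
  shows "\<exists>c. (\<exists>i<n. c i \<noteq> 0) \<and> (\<forall>j. (\<Sum>i<n. c i * w i j) = 0)"
proof -
  define sc :: "'k \<Rightarrow> (nat \<Rightarrow> 'k) \<Rightarrow> (nat \<Rightarrow> 'k)" where "sc = (\<lambda>c f x. c * f x)"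
  interpret V: vector_space sc
    by unfold_locales (auto simp: sc_def fun_eq_iff algebra_simps)
  define \<delta> :: "nat \<Rightarrow> nat \<Rightarrow> 'k" where "\<delta> = (\<lambda>j x. if x = j then 1 else 0)"
  have w_in_span: "w i \<in> V.span (\<delta> ` {..<d})" if "i < n" for i
  proof -
    have "w i = (\<Sum>j<d. sc (w i j) (\<delta> j))"
    proof
      fix x
      show "w i x = (\<Sum>j<d. sc (w i j) (\<delta> j)) x"
        using supp[OF that] by (cases "x < d")
          (simp_all add: sum_fun_apply sc_def \<delta>_def if_distrib[of "(*) _"] sum.delta cong: if_cong)
    qed
    also have "\<dots> \<in> V.span (\<delta> ` {..<d})"
      by (intro V.span_sum V.span_scale V.span_base) auto
    finally show ?thesis .
  qed
  define S where "S = w ` {..<n}"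
  have "card S = n" unfolding S_def using inj card_image by fastforce
  moreover have "card (\<delta> ` {..<d}) \<le> d" using card_image_le[of "{..<d}" \<delta>] by simp
  ultimately have "\<not> V.independent S"
    using V.independent_span_bound[of "\<delta> ` {..<d}" S] w_in_span \<open>d < n\<close> by (auto simp: S_def)
  then obtain U u where U: "finite U" "U \<subseteq> S" "(\<Sum>v\<in>U. sc (u v) v) = 0" and "\<exists>v\<in>U. u v \<noteq> 0"
    unfolding V.dependent_explicit by blast
  then obtain i where i: "i < n" "w i \<in> U" "u (w i) \<noteq> 0" unfolding S_def by auto
  define c where "c = (\<lambda>i. if w i \<in> U then u (w i) else 0)"
  have "(\<Sum>i<n. sc (c i) (w i)) = (\<Sum>v\<in>S. sc (if v \<in> U then u v else 0) v)"
    unfolding S_def c_def by (subst sum.reindex[OF inj]) (simp add: if_distrib)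
  also have "\<dots> = (\<Sum>v\<in>U. sc (u v) v)"
    by (rule sum.mono_neutral_cong_right) (use U in \<open>auto simp: S_def sc_def\<close>)
  finally have "\<forall>j. (\<Sum>i<n. c i * w i j) = 0"
    using U by (simp add: fun_eq_iff sum_fun_apply sc_def)
  moreover have "c i \<noteq> 0" using i by (simp add: c_def)
  ultimately show ?thesis using i(1) by blast
qed

lemma nontrivial_relation_if_supported_below:
  fixes w :: "nat \<Rightarrow> nat \<Rightarrow> 'k::field"
  assumes "\<And>i j. i < n \<Longrightarrow> d \<le> j \<Longrightarrow> w i j = 0" and "d < n"
  shows "\<exists>c. (\<exists>i<n. c i \<noteq> 0) \<and> (\<forall>j. (\<Sum>i<n. c i * w i j) = 0)"
proof (cases "inj_on w {..<n}")
  case False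
  then obtain i k where ik: "i < n" "k < n" "i \<noteq> k" "w i = w k"
    unfolding inj_on_def by auto
  define c where "c = (\<lambda>x. if x = i then (1::'k) else if x = k then -1 else 0)"
  have "(\<Sum>x<n. c x * w x j) = (\<Sum>x\<in>{i,k}. c x * w x j)" for j
    by (rule sum.mono_neutral_right) (use ik in \<open>auto simp: c_def\<close>)
  then have "\<forall>j. (\<Sum>x<n. c x * w x j) = 0" using ik by (simp add: c_def)
  then show ?thesis using ik by (intro exI[of _ c]) (auto simp: c_def)
qed (use nontrivial_relation_if_inj_supported_below assms in blast)

lemma X_power_cofactor:
  fixes Q :: "'k::field poly" assumes "poly Q 0 \<noteq> 0"
  shows "\<exists>a b. a * [:0,1:] ^ n + b * Q = 1"
proof (induction n)
  case 0 show ?case by (rule exI[of _ 1], rule exI[of _ 0]) simp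
next
  case (Suc n)
  then obtain a b where ab: "a * [:0,1:] ^ n + b * Q = 1" by blast
  define k where "k = poly a 0 / poly Q 0"
  have "poly (a - [:k:] * Q) 0 = 0" using assms by (simp add: k_def)
  then obtain a' where a': "a - [:k:] * Q = [:0,1:] * a'"
    using dvd_iff_poly_eq_0[of 0 "a - [:k:] * Q"] by (auto elim: dvdE)
  have "a' * [:0,1:] ^ Suc n + (b + [:k:] * [:0,1:] ^ n) * Q
      = [:0,1:] ^ n * (a - [:k:] * Q) + (b + [:k:] * [:0,1:] ^ n) * Q"
    by (simp only: a') (simp add: algebra_simps)
  also have "\<dots> = 1" using ab by (simp add: algebra_simps)
  finally show ?case by blast
qed

lemma X_power_decomp_bezout:
  fixes P :: "'k::field poly" assumes "P \<noteq> 0"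
  shows "\<exists>m Q a b. P = [:0,1:] ^ m * Q \<and> a * [:0,1:] ^ Suc m + b * Q = 1"
proof -
  obtain Q where Q: "P = [:0,1:] ^ order 0 P * Q" "\<not> [:0,1:] dvd Q"
    using order_decomp[OF assms, of 0] by auto
  have "poly Q 0 \<noteq> 0" using Q(2) dvd_iff_poly_eq_0[of 0 Q] by simp
  then show ?thesis using Q(1) X_power_cofactor by blast
qed

lemma one_minus_X_times_geometric_sum:
  "(1 - [:0,1:]) * (\<Sum>i<m. [:0,1:] ^ i) = (1 - [:0,1::'k::field:] ^ m)"
  by (induction m) (simp_all add: algebra_simps)

section \<open>Linear categories\<close>

text \<open>The clauses of \<open>linear_homs\<close> except finite-dimensionality.\<close>

definition hom_vector_spaces :: "('o, 'm, 'k::field) lcat \<Rightarrow> bool" where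
  "hom_vector_spaces C \<longleftrightarrow> (\<forall>X\<in>cObj C. \<forall>Y\<in>cObj C.
     cZero C X Y \<in> hom C X Y \<and>
     (\<forall>f\<in>hom C X Y. \<forall>g\<in>hom C X Y. cAdd C f g \<in> hom C X Y) \<and>
     (\<forall>a. \<forall>f\<in>hom C X Y. cSmul C a f \<in> hom C X Y) \<and>
     (\<forall>f\<in>hom C X Y. \<forall>g\<in>hom C X Y. \<forall>h\<in>hom C X Y.
        cAdd C (cAdd C f g) h = cAdd C f (cAdd C g h)) \<and>
     (\<forall>f\<in>hom C X Y. \<forall>g\<in>hom C X Y. cAdd C f g = cAdd C g f) \<and>
     (\<forall>f\<in>hom C X Y. cAdd C f (cZero C X Y) = f) \<and>
     (\<forall>f\<in>hom C X Y. cAdd C f (cSmul C (-1) f) = cZero C X Y) \<and>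
     (\<forall>f\<in>hom C X Y. cSmul C 1 f = f) \<and>
     (\<forall>a b. \<forall>f\<in>hom C X Y. cSmul C a (cSmul C b f) = cSmul C (a * b) f) \<and>
     (\<forall>a b. \<forall>f\<in>hom C X Y. cSmul C (a + b) f = cAdd C (cSmul C a f) (cSmul C b f)) \<and>
     (\<forall>a. \<forall>f\<in>hom C X Y. \<forall>g\<in>hom C X Y.
        cSmul C a (cAdd C f g) = cAdd C (cSmul C a f) (cSmul C a g)))"

definition hom_sum :: "('o, 'm, 'k) lcat \<Rightarrow> ('i \<Rightarrow> 'm) \<Rightarrow> 'i list \<Rightarrow> 'o \<Rightarrow> 'o \<Rightarrow> 'm" where
  "hom_sum D g ks X Y = foldr (\<lambda>k acc. cAdd D (g k) acc) ks (cZero D X Y)"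

definition poly_eval :: "('o, 'm, 'k::field) lcat \<Rightarrow> 'o \<Rightarrow> 'k poly \<Rightarrow> 'm \<Rightarrow> 'm" where
  "poly_eval D X q f = fold_coeffs (\<lambda>a b. cAdd D (cSmul D a (cId D X)) (cComp D f b)) q (cZero D X X)"

locale linear_cat =
  fixes D :: "('o, 'm, 'k::field) lcat"
  assumes cat: "is_category D" and lin: "hom_vector_spaces D" and bil: "bilinear_comp D"
begin

abbreviation "Ob \<equiv> cObj D"
abbreviation "Hom \<equiv> hom D"
abbreviation "cmp \<equiv> cComp D"
abbreviation "ad \<equiv> cAdd D"
abbreviation "zr \<equiv> cZero D"
abbreviation "sm \<equiv> cSmul D"
abbreviation "idm \<equiv> cId D"

lemma hom_mor: "f \<in> Hom X Y \<Longrightarrow> f \<in> cMor D" by (simp add: hom_def)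
lemma hom_dom: "f \<in> Hom X Y \<Longrightarrow> cDom D f = X" by (simp add: hom_def)
lemma hom_cod: "f \<in> Hom X Y \<Longrightarrow> cCod D f = Y" by (simp add: hom_def)
lemma hom_obs: "f \<in> Hom X Y \<Longrightarrow> X \<in> Ob \<and> Y \<in> Ob"
  using cat unfolding is_category_def hom_def by auto

lemma id_hom[simp]: "X \<in> Ob \<Longrightarrow> idm X \<in> Hom X X"
  using cat unfolding is_category_def by auto
lemma comp_hom: "f \<in> Hom X Y \<Longrightarrow> g \<in> Hom Y Z \<Longrightarrow> cmp g f \<in> Hom X Z"
  using cat hom_obs[of f X Y] hom_obs[of g Y Z] unfolding is_category_def by blast
lemma assoc: "f \<in> Hom W X \<Longrightarrow> g \<in> Hom X Y \<Longrightarrow> h \<in> Hom Y Z \<Longrightarrow> cmp h (cmp g f) = cmp (cmp h g) f"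
  using cat hom_obs[of f W X] hom_obs[of h Y Z] unfolding is_category_def by blast
lemma comp_id[simp]: "f \<in> Hom X Y \<Longrightarrow> cmp f (idm X) = f"
  using cat hom_obs[of f X Y] unfolding is_category_def by blast
lemma id_comp[simp]: "f \<in> Hom X Y \<Longrightarrow> cmp (idm Y) f = f"
  using cat hom_obs[of f X Y] unfolding is_category_def by blast

lemma hom_dom_ob: "f \<in> Hom X Y \<Longrightarrow> X \<in> Ob" using hom_obs by blast
lemma hom_cod_ob: "f \<in> Hom X Y \<Longrightarrow> Y \<in> Ob" using hom_obs by blast

lemma hom_space_laws: assumes "X \<in> Ob" "Y \<in> Ob" shows
  "zr X Y \<in> Hom X Y \<and>
     (\<forall>f\<in>Hom X Y. \<forall>g\<in>Hom X Y. ad f g \<in> Hom X Y) \<and>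
     (\<forall>a. \<forall>f\<in>Hom X Y. sm a f \<in> Hom X Y) \<and>
     (\<forall>f\<in>Hom X Y. \<forall>g\<in>Hom X Y. \<forall>h\<in>Hom X Y. ad (ad f g) h = ad f (ad g h)) \<and>
     (\<forall>f\<in>Hom X Y. \<forall>g\<in>Hom X Y. ad f g = ad g f) \<and>
     (\<forall>f\<in>Hom X Y. ad f (zr X Y) = f) \<and>
     (\<forall>f\<in>Hom X Y. ad f (sm (-1) f) = zr X Y) \<and>
     (\<forall>f\<in>Hom X Y. sm 1 f = f) \<and>
     (\<forall>a b. \<forall>f\<in>Hom X Y. sm a (sm b f) = sm (a * b) f) \<and>
     (\<forall>a b. \<forall>f\<in>Hom X Y. sm (a + b) f = ad (sm a f) (sm b f)) \<and>
     (\<forall>a. \<forall>f\<in>Hom X Y. \<forall>g\<in>Hom X Y. sm a (ad f g) = ad (sm a f) (sm a g))"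
  by (rule bspec[OF bspec[OF lin[unfolded hom_vector_spaces_def] assms(1)] assms(2)])

lemma zero_hom[simp]: "X \<in> Ob \<Longrightarrow> Y \<in> Ob \<Longrightarrow> zr X Y \<in> Hom X Y"
  using lin unfolding hom_vector_spaces_def by blast
lemma add_hom: "f \<in> Hom X Y \<Longrightarrow> g \<in> Hom X Y \<Longrightarrow> ad f g \<in> Hom X Y"
  by (frule hom_dom_ob, frule hom_cod_ob, drule (1) hom_space_laws, elim conjE, blast)
lemma sm_hom: "f \<in> Hom X Y \<Longrightarrow> sm a f \<in> Hom X Y"
  by (frule hom_dom_ob, frule hom_cod_ob, drule (1) hom_space_laws, elim conjE, blast)
lemma add_assoc: "f \<in> Hom X Y \<Longrightarrow> g \<in> Hom X Y \<Longrightarrow> h \<in> Hom X Y \<Longrightarrow> ad (ad f g) h = ad f (ad g h)"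
  by (frule hom_dom_ob, frule hom_cod_ob, drule (1) hom_space_laws, elim conjE, blast)
lemma add_comm: "f \<in> Hom X Y \<Longrightarrow> g \<in> Hom X Y \<Longrightarrow> ad f g = ad g f"
  by (frule hom_dom_ob, frule hom_cod_ob, drule (1) hom_space_laws, elim conjE, blast)
lemma add_zero[simp]: "f \<in> Hom X Y \<Longrightarrow> ad f (zr X Y) = f"
  by (frule hom_dom_ob, frule hom_cod_ob, drule (1) hom_space_laws, elim conjE, blast)
lemma add_neg_self: "f \<in> Hom X Y \<Longrightarrow> ad f (sm (-1) f) = zr X Y"
  by (frule hom_dom_ob, frule hom_cod_ob, drule (1) hom_space_laws, elim conjE, blast)
lemma sm_one[simp]: "f \<in> Hom X Y \<Longrightarrow> sm 1 f = f"
  by (frule hom_dom_ob, frule hom_cod_ob, drule (1) hom_space_laws, elim conjE, blast)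
lemma sm_sm: "f \<in> Hom X Y \<Longrightarrow> sm a (sm b f) = sm (a * b) f"
  by (frule hom_dom_ob, frule hom_cod_ob, drule (1) hom_space_laws, elim conjE, blast)
lemma add_sm: "f \<in> Hom X Y \<Longrightarrow> sm (a + b) f = ad (sm a f) (sm b f)"
  by (frule hom_dom_ob, frule hom_cod_ob, drule (1) hom_space_laws, elim conjE, blast)
lemma sm_add: assumes "f \<in> Hom X Y" "g \<in> Hom X Y" shows "sm a (ad f g) = ad (sm a f) (sm a g)"
proof -
  have "X \<in> Ob" "Y \<in> Ob" using hom_dom_ob[OF assms(1)] hom_cod_ob[OF assms(1)] .
  from hom_space_laws[OF this] have "\<forall>a. \<forall>f\<in>Hom X Y. \<forall>g\<in>Hom X Y. sm a (ad f g) = ad (sm a f) (sm a g)" by blast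
  thus ?thesis using assms by blast
qed

lemma comp_add: "f \<in> Hom X Y \<Longrightarrow> f' \<in> Hom X Y \<Longrightarrow> g \<in> Hom Y Z \<Longrightarrow> cmp g (ad f f') = ad (cmp g f) (cmp g f')"
  using bil hom_obs[of f X Y] hom_obs[of g Y Z] unfolding bilinear_comp_def by blast
lemma add_comp: "f \<in> Hom X Y \<Longrightarrow> g \<in> Hom Y Z \<Longrightarrow> g' \<in> Hom Y Z \<Longrightarrow> cmp (ad g g') f = ad (cmp g f) (cmp g' f)"
  using bil hom_obs[of f X Y] hom_obs[of g Y Z] unfolding bilinear_comp_def by blast
lemma comp_sm: "f \<in> Hom X Y \<Longrightarrow> g \<in> Hom Y Z \<Longrightarrow> cmp g (sm a f) = sm a (cmp g f)"
  using bil hom_obs[of f X Y] hom_obs[of g Y Z] unfolding bilinear_comp_def by blast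
lemma sm_comp: "f \<in> Hom X Y \<Longrightarrow> g \<in> Hom Y Z \<Longrightarrow> cmp (sm a g) f = sm a (cmp g f)"
  using bil hom_obs[of f X Y] hom_obs[of g Y Z] unfolding bilinear_comp_def by blast

lemma zero_add[simp]: "f \<in> Hom X Y \<Longrightarrow> ad (zr X Y) f = f"
  using add_comm[of f X Y "zr X Y"] hom_obs[of f X Y] by simp

lemma add_cancel: assumes "a \<in> Hom X Y" "b \<in> Hom X Y" "c \<in> Hom X Y" "ad a b = ad a c" shows "b = c"
proof -
  have n: "sm (-1) a \<in> Hom X Y" using assms sm_hom by blast
  have "b = ad (ad (sm (-1) a) a) b"
    using add_neg_self[OF assms(1)] add_comm[OF assms(1) n] assms by simp
  also have "\<dots> = ad (sm (-1) a) (ad a c)" using add_assoc[OF n assms(1) assms(2)] assms by simp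
  also have "\<dots> = ad (ad (sm (-1) a) a) c" using add_assoc[OF n assms(1) assms(3)] by simp
  also have "\<dots> = c" using add_neg_self[OF assms(1)] add_comm[OF assms(1) n] assms by simp
  finally show ?thesis .
qed

lemma zero_sm[simp]: assumes "f \<in> Hom X Y" shows "sm 0 f = zr X Y"
proof -
  have h: "sm 0 f \<in> Hom X Y" using assms sm_hom by blast
  have "ad (sm 0 f) (sm 0 f) = ad (sm 0 f) (zr X Y)"
    using add_sm[OF assms, of 0 0] h by simp
  thus ?thesis using add_cancel[OF h h] h hom_obs[OF assms] by simp
qed

lemma sm_zero[simp]: assumes "X \<in> Ob" "Y \<in> Ob" shows "sm a (zr X Y) = zr X Y"
proof -
  have "sm a (zr X Y) = sm a (sm 0 (zr X Y))" using zero_sm[of "zr X Y" X Y] assms zero_hom by metis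
  also have "\<dots> = zr X Y" using sm_sm[of "zr X Y" X Y a 0] assms by simp
  finally show ?thesis .
qed

lemma comp_zero[simp]: assumes "g \<in> Hom Y Z" "X \<in> Ob" shows "cmp g (zr X Y) = zr X Z"
proof -
  have Y: "Y \<in> Ob" "Z \<in> Ob" using hom_obs[OF assms(1)] by auto
  have "cmp g (zr X Y) = cmp g (sm 0 (zr X Y))" using Y assms by simp
  also have "\<dots> = sm 0 (cmp g (zr X Y))" using comp_sm[of "zr X Y" X Y g Z] Y assms by simp
  also have "\<dots> = zr X Z" using comp_hom[of "zr X Y" X Y g Z] Y assms by simp
  finally show ?thesis .
qed

lemma zero_comp[simp]: assumes "f \<in> Hom X Y" "Z \<in> Ob" shows "cmp (zr Y Z) f = zr X Z"
proof -
  have Y: "X \<in> Ob" "Y \<in> Ob" using hom_obs[OF assms(1)] by auto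
  have "cmp (zr Y Z) f = cmp (sm 0 (zr Y Z)) f" using Y assms by simp
  also have "\<dots> = sm 0 (cmp (zr Y Z) f)" using sm_comp[of f X Y "zr Y Z" Z] Y assms by simp
  also have "\<dots> = zr X Z" using comp_hom[of f X Y "zr Y Z" Z] Y assms by simp
  finally show ?thesis .
qed

lemma sm_eq_zeroD: assumes "f \<in> Hom X Y" "sm c f = zr X Y" "c \<noteq> 0" shows "f = zr X Y"
proof -
  have "f = sm (inverse c * c) f" using assms by simp
  also have "\<dots> = sm (inverse c) (sm c f)" using sm_sm[OF assms(1)] by simp
  also have "\<dots> = zr X Y" using assms hom_obs[OF assms(1)] by simp
  finally show ?thesis .
qed

lemma neg_add_self: "f \<in> Hom X Y \<Longrightarrow> ad (sm (-1) f) f = zr X Y"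
  using add_neg_self[of f X Y] add_comm[of f X Y "sm (-1) f"] sm_hom by metis

lemma eq_if_diff_zero: assumes "a \<in> Hom X Y" "b \<in> Hom X Y" "ad a (sm (-1) b) = zr X Y" shows "a = b"
proof -
  have nb: "sm (-1) b \<in> Hom X Y" using assms sm_hom by blast
  have "a = ad a (ad (sm (-1) b) b)" using neg_add_self[OF assms(2)] assms by simp
  also have "\<dots> = ad (ad a (sm (-1) b)) b" using add_assoc[OF assms(1) nb assms(2)] by simp
  also have "\<dots> = b" using assms by simp
  finally show ?thesis .
qed

lemma add_left_commute: assumes "a \<in> Hom X Y" "b \<in> Hom X Y" "c \<in> Hom X Y"
  shows "ad a (ad b c) = ad b (ad a c)"
proof -
  have "ad a (ad b c) = ad (ad a b) c" using add_assoc[OF assms] by simp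
  also have "\<dots> = ad (ad b a) c" using add_comm[OF assms(1,2)] by simp
  also have "\<dots> = ad b (ad a c)" using add_assoc[OF assms(2,1,3)] by simp
  finally show ?thesis .
qed

lemma add_add_add_commute: assumes "a \<in> Hom X Y" "b \<in> Hom X Y" "c \<in> Hom X Y" "d \<in> Hom X Y"
  shows "ad (ad a b) (ad c d) = ad (ad a c) (ad b d)"
proof -
  have "ad (ad a b) (ad c d) = ad a (ad b (ad c d))" using add_assoc[OF assms(1,2) add_hom[OF assms(3,4)]] by simp
  also have "\<dots> = ad a (ad c (ad b d))" using add_left_commute[OF assms(2,3,4)] by simp
  also have "\<dots> = ad (ad a c) (ad b d)" using add_assoc[OF assms(1,3) add_hom[OF assms(2,4)]] by simp
  finally show ?thesis .
qed

lemma hom_sum_Nil[simp]: "hom_sum D g [] X Y = zr X Y" by (simp add: hom_sum_def)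
lemma hom_sum_Cons[simp]: "hom_sum D g (k # ks) X Y = ad (g k) (hom_sum D g ks X Y)" by (simp add: hom_sum_def)

lemma hom_sum_hom: "X \<in> Ob \<Longrightarrow> Y \<in> Ob \<Longrightarrow> (\<forall>k\<in>set ks. g k \<in> Hom X Y) \<Longrightarrow> hom_sum D g ks X Y \<in> Hom X Y"
  by (induction ks) (auto intro: add_hom)

lemma hom_sum_cong: "(\<forall>k\<in>set ks. g k = g' k) \<Longrightarrow> hom_sum D g ks X Y = hom_sum D g' ks X Y"
  by (induction ks) auto

lemma hom_sum_append: assumes "X \<in> Ob" "Y \<in> Ob" "\<forall>k\<in>set (xs @ ys). g k \<in> Hom X Y"
  shows "hom_sum D g (xs @ ys) X Y = ad (hom_sum D g xs X Y) (hom_sum D g ys X Y)"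
  using assms(3)
proof (induction xs)
  case Nil then show ?case using assms by (simp add: hom_sum_hom)
next
  case (Cons k xs)
  have A: "hom_sum D g xs X Y \<in> Hom X Y" "hom_sum D g ys X Y \<in> Hom X Y" "g k \<in> Hom X Y"
    using hom_sum_hom[OF assms(1,2), of xs g] hom_sum_hom[OF assms(1,2), of ys g] Cons.prems by auto
  show ?case using Cons add_assoc[OF A(3) A(1) A(2)] by simp
qed

lemma hom_sum_comp_l: assumes "h \<in> Hom Y Z" "X \<in> Ob" "\<forall>k\<in>set ks. g k \<in> Hom X Y"
  shows "cmp h (hom_sum D g ks X Y) = hom_sum D (\<lambda>k. cmp h (g k)) ks X Z"
  using assms(3)
proof (induction ks)
  case Nil then show ?case using assms by simp
next
  case (Cons k ks)
  then show ?case using comp_add[of "g k" X Y "hom_sum D g ks X Y" h Z] hom_sum_hom[of X Y ks g] assms hom_obs by auto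
qed

lemma hom_sum_sm: assumes "X \<in> Ob" "Y \<in> Ob" "\<forall>k\<in>set ks. g k \<in> Hom X Y"
  shows "sm c (hom_sum D g ks X Y) = hom_sum D (\<lambda>k. sm c (g k)) ks X Y"
  using assms(3)
proof (induction ks)
  case Nil then show ?case using assms by simp
next
  case (Cons k ks)
  then show ?case using sm_add[of "g k" X Y "hom_sum D g ks X Y"] hom_sum_hom[of X Y ks g] assms by auto
qed

lemma hom_sum_add: assumes "X \<in> Ob" "Y \<in> Ob" "\<forall>k\<in>set ks. g k \<in> Hom X Y" "\<forall>k\<in>set ks. h k \<in> Hom X Y"
  shows "hom_sum D (\<lambda>k. ad (g k) (h k)) ks X Y = ad (hom_sum D g ks X Y) (hom_sum D h ks X Y)"
  using assms(3,4)
proof (induction ks)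
  case Nil then show ?case using assms by simp
next
  case (Cons k ks)
  then show ?case using add_add_add_commute[of "g k" X Y "h k" "hom_sum D g ks X Y" "hom_sum D h ks X Y"] hom_sum_hom[of X Y ks g]
      hom_sum_hom[of X Y ks h] assms by auto
qed

lemma hom_sum_zero: "X \<in> Ob \<Longrightarrow> Y \<in> Ob \<Longrightarrow> (\<forall>k\<in>set ks. g k = zr X Y) \<Longrightarrow> hom_sum D g ks X Y = zr X Y"
  by (induction ks) auto

lemma hom_sum_single: assumes "X \<in> Ob" "Y \<in> Ob" "distinct ks" "j \<in> set ks" "\<forall>k\<in>set ks. k \<noteq> j \<longrightarrow> g k = zr X Y"
  "g j \<in> Hom X Y"
  shows "hom_sum D g ks X Y = g j"
  using assms(3,4,5)
proof (induction ks)
  case Nil then show ?case by simp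
next
  case (Cons k ks)
  show ?case
  proof (cases "k = j")
    case True
    have "\<forall>k\<in>set ks. g k = zr X Y" using Cons.prems True by auto
    then have "hom_sum D g ks X Y = zr X Y" using hom_sum_zero[OF assms(1,2)] by blast
    then show ?thesis using True assms by simp
  next
    case False
    then show ?thesis using Cons assms hom_sum_hom by auto
  qed
qed

lemma hom_sum_upd: assumes "X \<in> Ob" "Y \<in> Ob" "distinct ks" "j \<in> set ks" "\<forall>k\<in>set ks. g k \<in> Hom X Y" "a \<in> Hom X Y"
  shows "ad (hom_sum D (g(j := a)) ks X Y) (g j) = ad (hom_sum D g ks X Y) a"
  using assms(3,4,5)
proof (induction ks)
  case Nil then show ?case by simp
next
  case (Cons k ks)
  show ?case
  proof (cases "k = j")
    case True
    then have e: "hom_sum D (g(j := a)) ks X Y = hom_sum D g ks X Y" using Cons.prems by (auto intro: hom_sum_cong)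
    have V: "hom_sum D g ks X Y \<in> Hom X Y" using hom_sum_hom Cons.prems assms by auto
    have gj: "g j \<in> Hom X Y" using Cons.prems True by auto
    have l: "hom_sum D (g(j := a)) (k # ks) X Y = ad a (hom_sum D g ks X Y)" using True e by simp
    have "ad (ad a (hom_sum D g ks X Y)) (g j) = ad (g j) (ad a (hom_sum D g ks X Y))"
      using add_comm[OF add_hom[OF assms(6) V] gj] .
    also have "\<dots> = ad (g j) (ad (hom_sum D g ks X Y) a)" using add_comm[OF assms(6) V] by simp
    also have "\<dots> = ad (ad (g j) (hom_sum D g ks X Y)) a" using add_assoc[OF gj V assms(6)] by simp
    finally show ?thesis using l True by (simp only: fun_upd_same hom_sum_Cons)
  next
    case False
    then have jin: "j \<in> set ks" using Cons.prems by auto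
    have V': "hom_sum D (g(j := a)) ks X Y \<in> Hom X Y"
      by (rule hom_sum_hom[OF assms(1,2)]) (use Cons.prems assms(6) in auto)
    have V: "hom_sum D g ks X Y \<in> Hom X Y" using hom_sum_hom Cons.prems assms by auto
    have gk: "g k \<in> Hom X Y" "g j \<in> Hom X Y" using Cons.prems jin by auto
    have ih: "ad (hom_sum D (g(j := a)) ks X Y) (g j) = ad (hom_sum D g ks X Y) a"
      by (rule Cons.IH) (use Cons.prems jin in auto)
    have "ad (hom_sum D (g(j := a)) (k # ks) X Y) (g j) = ad (g k) (ad (hom_sum D (g(j := a)) ks X Y) (g j))"
      using False add_assoc[OF gk(1) V' gk(2)] by simp
    also have "\<dots> = ad (g k) (ad (hom_sum D g ks X Y) a)" by (simp only: ih)
    also have "\<dots> = ad (hom_sum D g (k # ks) X Y) a" using add_assoc[OF gk(1) V assms(6)] by simp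
    finally show ?thesis .
  qed
qed

lemma hom_sum_split_term:
  assumes X: "X \<in> Ob" and eH: "\<And>j. j < n \<Longrightarrow> e j \<in> Hom X X" and fH: "f1 \<in> Hom X X" "f2 \<in> Hom X X"
    and f: "ad f1 f2 = e k" and k: "k < n"
  shows "hom_sum D (e(k := f1, n := f2)) [0..<Suc n] X X = hom_sum D e [0..<n] X X"
proof -
  define S V where "S = hom_sum D e [0..<n] X X" "V = hom_sum D (e(k := f1)) [0..<n] X X"
  have SH: "S \<in> Hom X X" and VH: "V \<in> Hom X X"
    unfolding S_V_def by (rule hom_sum_hom[OF X X], use eH fH in auto)+
  have "hom_sum D (e(k := f1, n := f2)) [0..<Suc n] X X = ad V f2"
    using hom_sum_append[OF X X, where g="e(k := f1, n := f2)" and xs="[0..<n]" and ys="[n]"] eH fH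
      hom_sum_cong[of "[0..<n]" "e(k := f1, n := f2)" "e(k := f1)"]
    by (auto simp: S_V_def)
  moreover have "ad V (e k) = ad S f1"
    unfolding S_V_def using hom_sum_upd[OF X X, of "[0..<n]" k e f1] eH fH k by auto
  then have "ad f1 (ad V f2) = ad f1 S"
    using add_left_commute[OF fH(1) VH fH(2)] f add_comm[OF SH fH(1)] by simp
  then have "ad V f2 = S" using add_cancel[OF fH(1) add_hom[OF VH fH(2)] SH] by blast
  ultimately show ?thesis by (simp add: S_V_def)
qed

lemma zero_obj_iff_id_eq_zero: assumes "X \<in> Ob" shows "is_zero_obj D X \<longleftrightarrow> idm X = zr X X"
proof
  assume "is_zero_obj D X"
  then have "\<exists>!f. f \<in> Hom X X" using assms unfolding is_zero_obj_def by blast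
  then show "idm X = zr X X" using assms id_hom zero_hom by blast
next
  assume z: "idm X = zr X X"
  have a: "f = zr X Y" if "f \<in> Hom X Y" for f Y
  proof -
    have "f = cmp f (idm X)" using that by simp
    also have "\<dots> = zr X Y" using z that hom_obs by simp
    finally show ?thesis .
  qed
  have b: "f = zr Y X" if "f \<in> Hom Y X" for f Y
  proof -
    have "f = cmp (idm X) f" using that by simp
    also have "\<dots> = zr Y X" using z that hom_obs by simp
    finally show ?thesis .
  qed
  show "is_zero_obj D X" unfolding is_zero_obj_def
  proof (intro conjI ballI)
    show "X \<in> Ob" by fact
    fix Y assume Y: "Y \<in> Ob"
    show "\<exists>!f. f \<in> Hom X Y" using a zero_hom[OF assms Y] by blast
    show "\<exists>!f. f \<in> Hom Y X" using b zero_hom[OF Y assms] by blast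
  qed
qed

lemma poly_eval_0[simp]: "poly_eval D X 0 f = zr X X" by (simp add: poly_eval_def)

lemma poly_eval_pCons: assumes "X \<in> Ob" "f \<in> Hom X X"
  shows "poly_eval D X (pCons a q) f = ad (sm a (idm X)) (cmp f (poly_eval D X q f))"
proof (cases "a = 0 \<and> q = 0")
  case True
  then show ?thesis using assms by (simp add: poly_eval_def zero_sm[OF id_hom[OF assms(1)]])
next
  case False
  then have nz: "pCons a q \<noteq> 0" by auto
  have "fold_coeffs (\<lambda>a b. ad (sm a (idm X)) (cmp f b)) (pCons a q) =
        (\<lambda>b. ad (sm a (idm X)) (cmp f b)) \<circ> fold_coeffs (\<lambda>a b. ad (sm a (idm X)) (cmp f b)) q"
    using False by (cases "a = 0") simp_all
  then show ?thesis unfolding poly_eval_def by simp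
qed

lemma poly_eval_hom: assumes "X \<in> Ob" "f \<in> Hom X X" shows "poly_eval D X q f \<in> Hom X X"
proof (induction q)
  case 0 then show ?case using assms by simp
next
  case (pCons a q)
  then show ?case using assms by (simp add: poly_eval_pCons add_hom sm_hom comp_hom)
qed

lemma poly_eval_add: assumes "X \<in> Ob" "f \<in> Hom X X" shows "poly_eval D X (p + q) f = ad (poly_eval D X p f) (poly_eval D X q f)"
proof (induction p q rule: poly_induct2)
  case 0 then show ?case using assms by simp
next
  case (pCons a p b q)
  have h: "sm a (idm X) \<in> Hom X X" "sm b (idm X) \<in> Hom X X" "cmp f (poly_eval D X p f) \<in> Hom X X" "cmp f (poly_eval D X q f) \<in> Hom X X"
    using sm_hom[OF id_hom[OF assms(1)]] comp_hom[OF poly_eval_hom[OF assms] assms(2)] by auto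
  show ?case using pCons assms
    by (simp add: poly_eval_pCons add_sm[OF id_hom[OF assms(1)]] comp_add[OF poly_eval_hom[OF assms] poly_eval_hom[OF assms] assms(2)] add_add_add_commute[OF h(1) h(2) h(3) h(4)])
qed

lemma poly_eval_smult: assumes "X \<in> Ob" "f \<in> Hom X X" shows "poly_eval D X (smult c p) f = sm c (poly_eval D X p f)"
proof (induction p)
  case 0 then show ?case using assms by simp
next
  case (pCons a p)
  have h: "sm a (idm X) \<in> Hom X X" "cmp f (poly_eval D X p f) \<in> Hom X X" "poly_eval D X p f \<in> Hom X X"
    using sm_hom[OF id_hom[OF assms(1)]] comp_hom[OF poly_eval_hom[OF assms] assms(2)] poly_eval_hom[OF assms] by auto
  show ?case using pCons assms
    by (simp add: poly_eval_pCons sm_add[OF h(1) h(2)] sm_sm[of "idm X" X X] comp_sm[OF h(3) assms(2)])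
qed

lemma poly_eval_pCons0: assumes "X \<in> Ob" "f \<in> Hom X X" shows "poly_eval D X (pCons 0 p) f = cmp f (poly_eval D X p f)"
  using assms comp_hom[OF poly_eval_hom[OF assms, of p] assms(2)] by (simp add: poly_eval_pCons zero_sm[OF id_hom[OF assms(1)]])

lemma poly_eval_mult: assumes "X \<in> Ob" "f \<in> Hom X X"
  shows "poly_eval D X (p * q) f = cmp (poly_eval D X p f) (poly_eval D X q f)"
proof (induction p)
  case 0 then show ?case using assms by (simp add: zero_comp[OF poly_eval_hom[OF assms]])
next
  case (pCons a p)
  have Q: "poly_eval D X q f \<in> Hom X X" "poly_eval D X p f \<in> Hom X X" using assms poly_eval_hom by auto
  have "poly_eval D X (pCons a p * q) f = ad (sm a (poly_eval D X q f)) (cmp f (cmp (poly_eval D X p f) (poly_eval D X q f)))"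
    using pCons assms by (simp add: poly_eval_add poly_eval_smult poly_eval_pCons0)
  also have "\<dots> = cmp (poly_eval D X (pCons a p) f) (poly_eval D X q f)"
  proof -
    have s1: "sm a (idm X) \<in> Hom X X" "cmp f (poly_eval D X p f) \<in> Hom X X"
      using sm_hom[OF id_hom[OF assms(1)]] comp_hom[OF poly_eval_hom[OF assms] assms(2)] by auto
    show ?thesis using assms
      by (simp add: poly_eval_pCons add_comp[OF Q(1) s1] sm_comp[OF Q(1) id_hom[OF assms(1)]] id_comp[OF Q(1)] assoc[OF Q(1) Q(2) assms(2)] Q)
  qed
  finally show ?case .
qed

lemma poly_eval_1: assumes "X \<in> Ob" "f \<in> Hom X X" shows "poly_eval D X 1 f = idm X"
  using assms by (simp add: one_pCons poly_eval_pCons comp_zero[OF assms(2) assms(1)] sm_one[OF id_hom[OF assms(1)]])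

lemma poly_eval_X: assumes "X \<in> Ob" "f \<in> Hom X X" shows "poly_eval D X [:0, 1:] f = f"
  using assms by (simp add: poly_eval_pCons comp_zero[OF assms(2) assms(1)] zero_sm[OF id_hom[OF assms(1)]] sm_one[OF id_hom[OF assms(1)]])

lemma poly_eval_neg: assumes "X \<in> Ob" "f \<in> Hom X X" shows "poly_eval D X (- p) f = sm (-1) (poly_eval D X p f)"
  using poly_eval_smult[OF assms, of "-1" p] by simp

lemma poly_eval_comm: assumes "X \<in> Ob" "f \<in> Hom X X"
  shows "cmp (poly_eval D X p f) (poly_eval D X q f) = cmp (poly_eval D X q f) (poly_eval D X p f)"
  using poly_eval_mult[OF assms, of p q] poly_eval_mult[OF assms, of q p] by (simp add: mult.commute)

end

section \<open>A Krull--Schmidt criterion\<close>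

definition orth_idems :: "('o, 'm, 'k) lcat \<Rightarrow> 'o \<Rightarrow> nat set \<Rightarrow> (nat \<Rightarrow> 'm) \<Rightarrow> bool" where
  "orth_idems D X K e \<longleftrightarrow> (\<forall>k\<in>K. e k \<in> hom D X X \<and> cComp D (e k) (e k) = e k \<and> e k \<noteq> cZero D X X) \<and>
     (\<forall>j\<in>K. \<forall>k\<in>K. j \<noteq> k \<longrightarrow> cComp D (e j) (e k) = cZero D X X)"

definition complete_orth_idems :: "('o, 'm, 'k) lcat \<Rightarrow> 'o \<Rightarrow> nat \<Rightarrow> (nat \<Rightarrow> 'm) \<Rightarrow> bool" where
  "complete_orth_idems D X n e \<longleftrightarrow> orth_idems D X {..<n} e \<and> hom_sum D e [0..<n] X X = cId D X"

definition idems_split :: "('o, 'm, 'k) lcat \<Rightarrow> bool" where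
  "idems_split D \<longleftrightarrow> (\<forall>X\<in>cObj D. \<forall>e\<in>hom D X X. cComp D e e = e \<longrightarrow>
     (\<exists>A \<iota> \<pi>. A \<in> cObj D \<and> \<iota> \<in> hom D A X \<and> \<pi> \<in> hom D X A \<and> cComp D \<pi> \<iota> = cId D A \<and> cComp D \<iota> \<pi> = e))"

definition orth_idems_bounded :: "('o, 'm, 'k) lcat \<Rightarrow> bool" where
  "orth_idems_bounded D \<longleftrightarrow> (\<forall>X\<in>cObj D. \<exists>N. \<forall>K e. finite K \<longrightarrow> orth_idems D X K e \<longrightarrow> card K \<le> N)"

definition endos_algebraic :: "('o, 'm, 'k::field) lcat \<Rightarrow> bool" where
  "endos_algebraic D \<longleftrightarrow> (\<forall>X\<in>cObj D. \<forall>f\<in>hom D X X. \<exists>P. P \<noteq> 0 \<and> poly_eval D X P f = cZero D X X)"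

context linear_cat
begin

abbreviation id_minus :: "'o \<Rightarrow> 'm \<Rightarrow> 'm" where
  "id_minus X f \<equiv> ad (idm X) (sm (-1) f)"

lemma id_minus_hom: "X \<in> Ob \<Longrightarrow> f \<in> Hom X X \<Longrightarrow> id_minus X f \<in> Hom X X"
  by (intro add_hom id_hom sm_hom)

lemma complement_idempotent:
  assumes X: "X \<in> Ob" and e: "e \<in> Hom X X" and ee: "cmp e e = e"
  shows "cmp e (id_minus X e) = zr X X"
    "cmp (id_minus X e) e = zr X X"
    "cmp (id_minus X e) (id_minus X e) = id_minus X e"
    "ad e (id_minus X e) = idm X"
proof -
  have I: "idm X \<in> Hom X X" using X by simp
  have N: "sm (-1) e \<in> Hom X X" using sm_hom[OF e] .
  note U = id_minus_hom[OF X e]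
  show 1: "cmp e (id_minus X e) = zr X X"
    using comp_add[OF I N e] comp_sm[OF e e] ee add_neg_self[OF e] comp_id[OF e] by simp
  show "cmp (id_minus X e) e = zr X X"
    using add_comp[OF e I N] sm_comp[OF e e] ee add_neg_self[OF e] id_comp[OF e] by simp
  show "cmp (id_minus X e) (id_minus X e) = id_minus X e"
    using add_comp[OF U I N] id_comp[OF U] sm_comp[OF U e] 1 sm_zero[OF X X] add_zero[OF U] by simp
  show "ad e (id_minus X e) = idm X"
    using add_left_commute[OF e I N] add_neg_self[OF e] add_zero[OF I] by simp
qed

lemma split_idempotent_absorbs:
  assumes "\<iota> \<in> Hom A X" "\<pi> \<in> Hom X A" "cmp \<pi> \<iota> = idm A" "cmp \<iota> \<pi> = e"
  shows "cmp e \<iota> = \<iota>" "cmp \<pi> e = \<pi>"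
  using assoc[OF assms(1) assms(2) assms(1)] assoc[OF assms(2) assms(1) assms(2)] assms(3,4)
    comp_id[OF assms(1)] id_comp[OF assms(2)] by simp_all

lemma split_idempotent_zero_if_zero_obj:
  assumes "A \<in> Ob" "\<iota> \<in> Hom A X" "\<pi> \<in> Hom X A" "cmp \<iota> \<pi> = e" "is_zero_obj D A"
  shows "e = zr X X"
proof -
  have "e = cmp (cmp \<iota> (idm A)) \<pi>" using assms(2,4) by simp
  also have "\<dots> = zr X X"
    using assms zero_obj_iff_id_eq_zero comp_zero[OF assms(2) assms(1)] zero_comp[OF assms(3) hom_cod_ob[OF assms(2)]]
    by simp
  finally show ?thesis .
qed

lemma section_retraction_idempotent:
  assumes "a \<in> Hom Y X" "b \<in> Hom X Y" "cmp b a = idm Y"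
  shows "cmp (cmp a b) (cmp a b) = cmp a b"
  using assoc[OF comp_hom[OF assms(2,1)] assms(2) assms(1)] assoc[OF assms(2) assms(1) assms(2)] assms
  by simp

lemma section_retraction_nonzero:
  assumes "a \<in> Hom Y X" "b \<in> Hom X Y" "cmp b a = idm Y" "\<not> is_zero_obj D Y"
  shows "cmp a b \<noteq> zr X X"
proof
  assume z: "cmp a b = zr X X"
  have Y: "Y \<in> Ob" "X \<in> Ob" using hom_obs[OF assms(1)] by auto
  have "idm Y = cmp b (cmp (cmp a b) a)"
    using assoc[OF assms(1) assms(2) assms(1)] assoc[OF comp_hom[OF assms(1,2)] assms(1) assms(2)] assms(3)
      id_comp[OF id_hom[OF Y(1)]] by simp
  also have "\<dots> = zr Y Y" using z zero_comp[OF assms(1) Y(2)] comp_zero[OF assms(2) Y(1)] by simp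
  finally show False using zero_obj_iff_id_eq_zero[OF Y(1)] assms(4) by simp
qed

lemma section_retraction_orthogonal:
  assumes "a \<in> Hom Y X" "b \<in> Hom X Y" "a' \<in> Hom Y' X" "b' \<in> Hom X Y'" "cmp b a' = zr Y' Y"
  shows "cmp (cmp a b) (cmp a' b') = zr X X"
proof -
  have "cmp (cmp a b) (cmp a' b') = cmp a (cmp (cmp b a') b')"
    using assoc[OF comp_hom[OF assms(4,3)] assms(2) assms(1)] assoc[OF assms(4) assms(3) assms(2)] by simp
  then show ?thesis
    using assms(5) zero_comp[OF assms(4)] comp_zero[OF assms(1)] hom_obs[OF assms(1)] hom_obs[OF assms(4)] by simp
qed

lemma orthogonal_if_absorbed:
  assumes "f \<in> Hom X X" "e \<in> Hom X X" "e' \<in> Hom X X" "cmp e f = f" "cmp f e = f"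
    "cmp e' e = zr X X" "cmp e e' = zr X X"
  shows "cmp e' f = zr X X" "cmp f e' = zr X X"
  using assoc[OF assms(1,2,3)] assoc[OF assms(3,2,1)] assms zero_comp[of f X X X] comp_zero[of f X X X]
  by (simp_all add: hom_obs)

lemma idempotent_trivial_if_indecomposable:
  assumes sp: "idems_split D" and ind: "indecomposable D X" and e: "e \<in> Hom X X" and ee: "cmp e e = e"
  shows "e = zr X X \<or> e = idm X"
proof (rule ccontr)
  assume ne: "\<not> (e = zr X X \<or> e = idm X)"
  have X: "X \<in> Ob" using ind unfolding indecomposable_def by blast
  define u where "u = id_minus X e"
  have uH: "u \<in> Hom X X" using id_minus_hom[OF X e] by (simp add: u_def)
  note cf = complement_idempotent[OF X e ee, folded u_def]
  obtain A \<iota> \<pi> where A: "A \<in> Ob" "\<iota> \<in> Hom A X" "\<pi> \<in> Hom X A" "cmp \<pi> \<iota> = idm A" "cmp \<iota> \<pi> = e"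
    using sp X e ee unfolding idems_split_def by blast
  obtain B \<iota>' \<pi>' where B: "B \<in> Ob" "\<iota>' \<in> Hom B X" "\<pi>' \<in> Hom X B" "cmp \<pi>' \<iota>' = idm B" "cmp \<iota>' \<pi>' = u"
    using sp X uH cf(3) unfolding idems_split_def by blast
  note sA = split_idempotent_absorbs[OF A(2-5)] and sB = split_idempotent_absorbs[OF B(2-5)]
  have "cmp \<pi>' \<iota> = cmp \<pi>' (cmp (cmp u e) \<iota>)"
    using sA(1) sB(2) assoc[OF comp_hom[OF A(2) e] uH B(3)] assoc[OF A(2) e uH] by simp
  also have "\<dots> = zr A B" using cf(2) zero_comp[OF A(2) X] comp_zero[OF B(3) A(1)] by simp
  moreover have "cmp \<pi> \<iota>' = cmp \<pi> (cmp (cmp e u) \<iota>')"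
    using sA(2) sB(1) assoc[OF comp_hom[OF B(2) uH] e A(3)] assoc[OF B(2) uH e] by simp
  moreover have "\<dots> = zr B A" using cf(1) zero_comp[OF B(2) X] comp_zero[OF A(3) B(1)] by simp
  ultimately have bp: "biprod D A B X \<iota> \<iota>' \<pi> \<pi>'"
    unfolding biprod_def using A B X cf(4) by (simp add: u_def)
  have "\<not> is_zero_obj D A" using split_idempotent_zero_if_zero_obj[OF A(1-3) A(5)] ne by blast
  moreover have "\<not> is_zero_obj D B"
  proof
    assume "is_zero_obj D B"
    then have "u = zr X X" using split_idempotent_zero_if_zero_obj[OF B(1-3) B(5)] by blast
    then show False using cf(4) add_zero[OF e] ne by simp
  qed
  ultimately show False using ind bp unfolding indecomposable_def by blast
qed

subsection \<open>Fitting's lemma\<close>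

lemma end_unit_if_poly_eval_X_mult_eq_id:
  assumes X: "X \<in> Ob" and f: "f \<in> Hom X X" and q: "poly_eval D X ([:0,1:] * q) f = idm X"
  shows "end_unit D X f"
proof -
  define g where "g = poly_eval D X q f"
  have fg: "cmp f g = idm X"
    using q by (simp only: poly_eval_mult[OF X f] poly_eval_X[OF X f] g_def)
  moreover have "cmp g f = idm X"
    using fg poly_eval_comm[OF X f, of q "[:0,1:]"] poly_eval_X[OF X f] by (simp add: g_def)
  ultimately show ?thesis unfolding end_unit_def g_def using poly_eval_hom[OF X f] by blast
qed

lemma end_unit_id_minus_if_nilpotent:
  assumes X: "X \<in> Ob" and f: "f \<in> Hom X X" and nil: "poly_eval D X ([:0,1:] ^ m) f = zr X X"
  shows "end_unit D X (id_minus X f)"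
proof -
  define S where "S = (\<Sum>i<m. [:0,1::'k:] ^ i)"
  define g where "g = poly_eval D X S f"
  have u: "poly_eval D X (1 - [:0,1:]) f = id_minus X f"
    by (simp only: diff_conv_add_uminus poly_eval_add[OF X f] poly_eval_neg[OF X f] poly_eval_1[OF X f]
        poly_eval_X[OF X f])
  have "cmp (poly_eval D X (1 - [:0,1:]) f) g = poly_eval D X (1 - [:0,1:] ^ m) f"
    unfolding g_def S_def by (simp only: poly_eval_mult[OF X f, symmetric] one_minus_X_times_geometric_sum)
  also have "\<dots> = idm X" using nil sm_zero[OF X X] add_zero[OF id_hom[OF X]]
    by (simp only: diff_conv_add_uminus poly_eval_add[OF X f] poly_eval_neg[OF X f] poly_eval_1[OF X f])
  finally have ug: "cmp (id_minus X f) g = idm X" using u by simp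
  moreover have "cmp g (id_minus X f) = idm X"
    using ug poly_eval_comm[OF X f, of "1 - [:0,1:]" S] u unfolding g_def by simp
  ultimately show ?thesis unfolding end_unit_def g_def using poly_eval_hom[OF X f] by blast
qed

text \<open>
  If \<open>P = x\<^sup>m Q\<close> annihilates f and \<open>a x\<^sup>m\<^sup>+\<^sup>1 + b Q = 1\<close>, then \<open>e = (b Q)(f)\<close> is idempotent
  since \<open>(b Q)\<^sup>2 - b Q\<close> is a multiple of P; if \<open>e = 0\<close> then \<open>(a x\<^sup>m\<^sup>+\<^sup>1)(f) = 1\<close>, and if
  \<open>e = 1\<close> then \<open>f\<^sup>m = (x\<^sup>m b Q)(f) = (b P)(f) = 0\<close>.
\<close>

lemma fitting_idempotent:
  assumes X: "X \<in> Ob" and f: "f \<in> Hom X X" and P: "P \<noteq> 0" "poly_eval D X P f = zr X X"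
  obtains e where "e \<in> Hom X X" "cmp e e = e"
    "e = zr X X \<Longrightarrow> end_unit D X f" "e = idm X \<Longrightarrow> end_unit D X (id_minus X f)"
proof -
  define x :: "'k poly" where "x = [:0,1:]"
  obtain m Q a b where mq: "P = x ^ m * Q" and ab: "a * x ^ Suc m + b * Q = 1"
    using X_power_decomp_bezout[OF P(1)] unfolding x_def by blast
  note pH = poly_eval_hom[OF X f] and pmult = poly_eval_mult[OF X f]
  define e where "e = poly_eval D X (b * Q) f"
  have "b * Q = 1 - a * x ^ Suc m" using ab by (simp add: algebra_simps)
  then have "b * Q * (b * Q) = b * Q * (1 - a * x ^ Suc m)" by simp
  also have "\<dots> = b * Q + - ((a * b * x) * P)" unfolding mq by (simp add: algebra_simps)
  finally have "cmp e e = ad e (sm (-1) (cmp (poly_eval D X (a * b * x) f) (zr X X)))"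
    unfolding e_def pmult[symmetric] by (simp only: poly_eval_add[OF X f] poly_eval_neg[OF X f] pmult P(2))
  then have ee: "cmp e e = e" using comp_zero[OF pH X] sm_zero[OF X X] add_zero[OF pH] by (simp add: e_def)
  have unit: "end_unit D X f" if "e = zr X X"
  proof (rule end_unit_if_poly_eval_X_mult_eq_id[OF X f])
    have "x * (a * x ^ m) = 1 + - (b * Q)" using ab by (simp add: algebra_simps)
    then show "poly_eval D X ([:0,1:] * (a * x ^ m)) f = idm X"
      using that sm_zero[OF X X] add_zero[OF id_hom[OF X]] unfolding x_def[symmetric]
      by (simp only: poly_eval_add[OF X f] poly_eval_neg[OF X f] poly_eval_1[OF X f] e_def[symmetric])
  qed
  have nil: "end_unit D X (id_minus X f)" if "e = idm X"
  proof (rule end_unit_id_minus_if_nilpotent[OF X f])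
    have xb: "x ^ m * (b * Q) = b * P" unfolding mq by (simp add: algebra_simps)
    have "cmp (poly_eval D X (x ^ m) f) e = poly_eval D X (b * P) f"
      unfolding e_def pmult[symmetric] by (simp only: xb)
    also have "\<dots> = zr X X" using pmult P(2) comp_zero[OF pH X] by simp
    finally have "cmp (poly_eval D X (x ^ m) f) e = zr X X" .
    then show "poly_eval D X ([:0,1:] ^ m) f = zr X X" using that comp_id[OF pH] by (simp add: x_def)
  qed
  show ?thesis using that[of e] pH ee unit nil by (simp add: e_def)
qed

lemma local_end_if_indecomposable:
  assumes sp: "idems_split D" and alg: "endos_algebraic D" and ind: "indecomposable D X"
  shows "local_end D X"
proof -
  have X: "X \<in> Ob" and nz: "\<not> is_zero_obj D X" using ind unfolding indecomposable_def by auto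
  have "end_unit D X (id_minus X f)" if f: "f \<in> Hom X X" and nu: "\<not> end_unit D X f" for f
  proof -
    obtain P where "P \<noteq> 0" "poly_eval D X P f = zr X X" using alg X f unfolding endos_algebraic_def by blast
    from fitting_idempotent[OF X f this] obtain e where "e \<in> Hom X X" "cmp e e = e"
      "e = zr X X \<Longrightarrow> end_unit D X f" "e = idm X \<Longrightarrow> end_unit D X (id_minus X f)" by blast
    then show ?thesis using idempotent_trivial_if_indecomposable[OF sp ind] nu by blast
  qed
  then show ?thesis unfolding local_end_def using zero_obj_iff_id_eq_zero[OF X] nz by blast
qed

lemma split_biprod_sum:
  assumes spl: "\<iota> \<in> Hom A X" "\<pi> \<in> Hom X A" "cmp \<iota> \<pi> = e"
    and B: "i1 \<in> Hom A1 A" "i2 \<in> Hom A2 A" "p1 \<in> Hom A A1" "p2 \<in> Hom A A2"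
      "ad (cmp i1 p1) (cmp i2 p2) = idm A"
  shows "ad (cmp (cmp \<iota> i1) (cmp p1 \<pi>)) (cmp (cmp \<iota> i2) (cmp p2 \<pi>)) = e"
proof -
  have r: "cmp (cmp \<iota> i) (cmp p \<pi>) = cmp \<iota> (cmp (cmp i p) \<pi>)" if "p \<in> Hom A Y" "i \<in> Hom Y A" for p i Y
    using assoc[OF comp_hom[OF spl(2) that(1)] that(2) spl(1)] assoc[OF spl(2) that(1) that(2)] by simp
  have "ad (cmp (cmp \<iota> i1) (cmp p1 \<pi>)) (cmp (cmp \<iota> i2) (cmp p2 \<pi>))
      = cmp \<iota> (cmp (ad (cmp i1 p1) (cmp i2 p2)) \<pi>)"
    using r B add_comp[OF spl(2) comp_hom[OF B(3) B(1)] comp_hom[OF B(4) B(2)]]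
      comp_add[OF comp_hom[OF spl(2) comp_hom[OF B(3) B(1)]] comp_hom[OF spl(2) comp_hom[OF B(4) B(2)]] spl(1)]
    by simp
  also have "\<dots> = e" using B(5) id_comp[OF spl(2)] spl(3) by simp
  finally show ?thesis .
qed

lemma split_idempotent_biprod:
  assumes spl: "\<iota> \<in> Hom A X" "\<pi> \<in> Hom X A" "cmp \<pi> \<iota> = idm A" "cmp \<iota> \<pi> = e"
    and bp: "biprod D A1 A2 A i1 i2 p1 p2" and nz: "\<not> is_zero_obj D A1" "\<not> is_zero_obj D A2"
  obtains f1 f2 where "orth_idems D X {0, 1} (\<lambda>j. if j = 0 then f1 else f2)" "ad f1 f2 = e"
    "cmp e f1 = f1" "cmp f1 e = f1" "cmp e f2 = f2" "cmp f2 e = f2"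
proof -
  have B: "i1 \<in> Hom A1 A" "i2 \<in> Hom A2 A" "p1 \<in> Hom A A1" "p2 \<in> Hom A A2"
    "cmp p1 i1 = idm A1" "cmp p2 i2 = idm A2" "cmp p2 i1 = zr A1 A2" "cmp p1 i2 = zr A2 A1"
    "ad (cmp i1 p1) (cmp i2 p2) = idm A"
    using bp unfolding biprod_def by auto
  have X: "X \<in> Ob" using hom_cod_ob[OF spl(1)] .
  note sf = split_idempotent_absorbs[OF spl]
  have eH: "e \<in> Hom X X" using comp_hom[OF spl(2,1)] spl(4) by simp
  define a1 b1 a2 b2 where "a1 = cmp \<iota> i1" "b1 = cmp p1 \<pi>" "a2 = cmp \<iota> i2" "b2 = cmp p2 \<pi>"
  have ab_hom: "a1 \<in> Hom A1 X" "b1 \<in> Hom X A1" "a2 \<in> Hom A2 X" "b2 \<in> Hom X A2"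
    unfolding a1_b1_a2_b2_def using comp_hom B spl by blast+
  have ba: "cmp (cmp p \<pi>) (cmp \<iota> i) = cmp p i" if "p \<in> Hom A Y" "i \<in> Hom Z A" for p i Y Z
    using assoc[OF comp_hom[OF that(2) spl(1)] spl(2) that(1)] assoc[OF that(2) spl(1) spl(2)] spl(3)
      id_comp[OF that(2)] by simp
  have b1a1: "cmp b1 a1 = idm A1" and b2a2: "cmp b2 a2 = idm A2"
    and b2a1: "cmp b2 a1 = zr A1 A2" and b1a2: "cmp b1 a2 = zr A2 A1"
    unfolding a1_b1_a2_b2_def using ba B by auto
  define f1 f2 where "f1 = cmp a1 b1" "f2 = cmp a2 b2"
  have fH: "f1 \<in> Hom X X" "f2 \<in> Hom X X" unfolding f1_f2_def using comp_hom ab_hom by blast+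
  have "cmp f1 f1 = f1" "cmp f2 f2 = f2"
    unfolding f1_f2_def using section_retraction_idempotent ab_hom b1a1 b2a2 by auto
  moreover have "f1 \<noteq> zr X X" "f2 \<noteq> zr X X"
    unfolding f1_f2_def using section_retraction_nonzero ab_hom b1a1 b2a2 nz by auto
  moreover have "cmp f1 f2 = zr X X" "cmp f2 f1 = zr X X"
    unfolding f1_f2_def using section_retraction_orthogonal[OF ab_hom b1a2]
      section_retraction_orthogonal[OF ab_hom(3,4,1,2) b2a1] by auto
  ultimately have "orth_idems D X {0, 1} (\<lambda>j. if j = 0 then f1 else f2)"
    unfolding orth_idems_def using fH by auto
  moreover have "ad f1 f2 = e"
    unfolding f1_f2_def a1_b1_a2_b2_def using split_biprod_sum[OF spl(1,2,4) B(1-4,9)] .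
  moreover have "cmp e a1 = a1" "cmp e a2 = a2" "cmp b1 e = b1" "cmp b2 e = b2"
    unfolding a1_b1_a2_b2_def
    using assoc[OF B(1) spl(1) eH] assoc[OF B(2) spl(1) eH] assoc[OF eH spl(2) B(3)] assoc[OF eH spl(2) B(4)] sf
    by simp_all
  then have "cmp e f1 = f1" "cmp f1 e = f1" "cmp e f2 = f2" "cmp f2 e = f2"
    unfolding f1_f2_def using assoc[OF ab_hom(2,1) eH] assoc[OF ab_hom(4,3) eH]
      assoc[OF eH ab_hom(2,1)] assoc[OF eH ab_hom(4,3)] by auto
  ultimately show ?thesis using that by blast
qed

lemma complete_orth_idems_refine:
  assumes X: "X \<in> Ob" and ce: "complete_orth_idems D X n e" and k: "k < n"
    and f: "orth_idems D X {0, 1} (\<lambda>j. if j = 0 then f1 else f2)" "ad f1 f2 = e k"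
      "cmp (e k) f1 = f1" "cmp f1 (e k) = f1" "cmp (e k) f2 = f2" "cmp f2 (e k) = f2"
  shows "complete_orth_idems D X (Suc n) (e(k := f1, n := f2))"
proof -
  have eH: "\<And>j. j < n \<Longrightarrow> e j \<in> Hom X X"
    and eO: "\<And>i j. i < n \<Longrightarrow> j < n \<Longrightarrow> i \<noteq> j \<Longrightarrow> cmp (e i) (e j) = zr X X"
    and se: "hom_sum D e [0..<n] X X = idm X"
    using ce unfolding complete_orth_idems_def orth_idems_def by auto
  have fH: "f1 \<in> Hom X X" "f2 \<in> Hom X X" and f12: "cmp f1 f2 = zr X X" "cmp f2 f1 = zr X X"
    using f(1) unfolding orth_idems_def by (auto dest: bspec[of _ _ 0] bspec[of _ _ 1])
  have orth: "cmp (e j) f = zr X X" "cmp f (e j) = zr X X" if "j < n" "j \<noteq> k" "f \<in> {f1, f2}" for j f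
    using that orthogonal_if_absorbed[OF _ eH[OF k] eH[OF that(1)] _ _ eO[OF that(1) k that(2)]
      eO[OF k that(1) that(2)[symmetric]]] f(3-6) fH by auto
  define e' where "e' = e(k := f1, n := f2)"
  have e': "e' j = (if j = n then f2 else if j = k then f1 else e j)" for j
    using k by (simp add: e'_def)
  have "orth_idems D X {..<Suc n} e'"
    unfolding orth_idems_def
  proof (intro conjI ballI impI)
    fix j assume "j \<in> {..<Suc n}"
    then show "e' j \<in> Hom X X" "cmp (e' j) (e' j) = e' j" "e' j \<noteq> zr X X"
      using ce f(1) unfolding e' complete_orth_idems_def orth_idems_def by auto
  next
    fix i j assume "i \<in> {..<Suc n}" "j \<in> {..<Suc n}" "i \<noteq> j"
    then show "cmp (e' i) (e' j) = zr X X"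
      using eO orth f12 k unfolding e' by auto
  qed
  moreover have "hom_sum D e' [0..<Suc n] X X = idm X"
    using hom_sum_split_term[of X n e, OF X eH fH f(2) k] se by (simp add: e'_def)
  ultimately show ?thesis unfolding complete_orth_idems_def e'_def by blast
qed

lemma nbiprod_if_complete_orth_idems:
  assumes sp: "idems_split D" and X: "X \<in> Ob" and ce: "complete_orth_idems D X n e"
  obtains A \<iota> \<pi> where "nbiprod D A n X \<iota> \<pi>" "\<And>k. k < n \<Longrightarrow> cmp (\<iota> k) (\<pi> k) = e k"
proof -
  have eH: "\<And>j. j < n \<Longrightarrow> e j \<in> Hom X X" and eI: "\<And>j. j < n \<Longrightarrow> cmp (e j) (e j) = e j"
    and eO: "\<And>i j. i < n \<Longrightarrow> j < n \<Longrightarrow> i \<noteq> j \<Longrightarrow> cmp (e i) (e j) = zr X X"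
    and se: "hom_sum D e [0..<n] X X = idm X"
    using ce unfolding complete_orth_idems_def orth_idems_def by auto
  have "\<exists>A \<iota> \<pi>. k < n \<longrightarrow> A \<in> Ob \<and> \<iota> \<in> Hom A X \<and> \<pi> \<in> Hom X A \<and> cmp \<pi> \<iota> = idm A \<and> cmp \<iota> \<pi> = e k" for k
    using sp X eH eI unfolding idems_split_def by blast
  then obtain A \<iota> \<pi> where S: "\<And>k. k < n \<Longrightarrow> A k \<in> Ob \<and> \<iota> k \<in> Hom (A k) X \<and> \<pi> k \<in> Hom X (A k) \<and>
      cmp (\<pi> k) (\<iota> k) = idm (A k) \<and> cmp (\<iota> k) (\<pi> k) = e k"
    by metis
  have "cmp (\<pi> j) (\<iota> k) = zr (A k) (A j)" if "j < n" "k < n" "j \<noteq> k" for j k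
  proof -
    have j: "\<iota> j \<in> Hom (A j) X" "\<pi> j \<in> Hom X (A j)" and k: "\<iota> k \<in> Hom (A k) X" "\<pi> k \<in> Hom X (A k)"
      using S that by auto
    have "cmp (\<pi> j) (\<iota> k) = cmp (cmp (\<pi> j) (e j)) (cmp (e k) (\<iota> k))"
      using split_idempotent_absorbs[of "\<iota> j" "A j" X "\<pi> j"] split_idempotent_absorbs[of "\<iota> k" "A k" X "\<pi> k"]
        S that by simp
    also have "\<dots> = cmp (\<pi> j) (cmp (cmp (e j) (e k)) (\<iota> k))"
      using assoc[OF comp_hom[OF k(1) eH[OF that(2)]] eH[OF that(1)] j(2)]
        assoc[OF k(1) eH[OF that(2)] eH[OF that(1)]] by simp
    also have "\<dots> = zr (A k) (A j)"
      using eO[OF that] zero_comp[OF k(1) X] comp_zero[OF j(2) hom_dom_ob[OF k(1)]] by simp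
    finally show ?thesis .
  qed
  moreover have "foldr (\<lambda>k acc. ad (cmp (\<iota> k) (\<pi> k)) acc) [0..<n] (zr X X) = idm X"
    using se hom_sum_cong[of "[0..<n]" "\<lambda>k. cmp (\<iota> k) (\<pi> k)" e] S by (simp add: hom_sum_def)
  ultimately have "nbiprod D A n X \<iota> \<pi>" unfolding nbiprod_def using X S by auto
  then show ?thesis using that S by blast
qed

lemma exists_indecomposable_decomposition:
  assumes sp: "idems_split D" and bd: "orth_idems_bounded D" and X: "X \<in> Ob"
  shows "\<exists>n A \<iota> \<pi>. (\<forall>k<n. indecomposable D (A k)) \<and> nbiprod D A n X \<iota> \<pi>"
proof -
  obtain N where N: "\<And>K e. finite K \<Longrightarrow> orth_idems D X K e \<Longrightarrow> card K \<le> N"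
    using bd X unfolding orth_idems_bounded_def by blast
  define has_family where "has_family n \<longleftrightarrow> (\<exists>e. complete_orth_idems D X n e)" for n
  have bound: "n \<le> N" if "has_family n" for n
    using N that unfolding has_family_def complete_orth_idems_def by fastforce
  have "complete_orth_idems D X (if idm X = zr X X then 0 else 1) (\<lambda>_. idm X)"
    unfolding complete_orth_idems_def orth_idems_def using X id_comp[OF id_hom[OF X]] by auto
  then have "has_family (if idm X = zr X X then 0 else 1)" unfolding has_family_def by blast
  define n where "n = (GREATEST n. has_family n)"
  have maximal: "\<And>n'. has_family n' \<Longrightarrow> n' \<le> n"
    unfolding n_def using Greatest_le_nat bound by blast
  have "has_family n" unfolding n_def using GreatestI_nat bound \<open>has_family _\<close> by blast
  then obtain e where ce: "complete_orth_idems D X n e" unfolding has_family_def by blast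
  obtain A \<iota> \<pi> where nb: "nbiprod D A n X \<iota> \<pi>" and e: "\<And>k. k < n \<Longrightarrow> cmp (\<iota> k) (\<pi> k) = e k"
    using nbiprod_if_complete_orth_idems[OF sp X ce] by blast
  have S: "A k \<in> Ob" "\<iota> k \<in> Hom (A k) X" "\<pi> k \<in> Hom X (A k)" "cmp (\<pi> k) (\<iota> k) = idm (A k)"
    if "k < n" for k using nb that unfolding nbiprod_def by auto
  have "indecomposable D (A k)" if k: "k < n" for k
  proof -
    have "e k \<noteq> zr X X" using ce k unfolding complete_orth_idems_def orth_idems_def by auto
    then have "\<not> is_zero_obj D (A k)" using split_idempotent_zero_if_zero_obj[OF S(1-3)[OF k] e[OF k]] by blast
    moreover have "\<not> biprod D A1 A2 (A k) i1 i2 p1 p2"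
      if "\<not> is_zero_obj D A1" "\<not> is_zero_obj D A2" for A1 A2 i1 i2 p1 p2
    proof
      assume "biprod D A1 A2 (A k) i1 i2 p1 p2"
      from split_idempotent_biprod[OF S(2-4)[OF k] e[OF k] this that] obtain f1 f2 where
        "orth_idems D X {0, 1} (\<lambda>j. if j = 0 then f1 else f2)" "ad f1 f2 = e k"
        "cmp (e k) f1 = f1" "cmp f1 (e k) = f1" "cmp (e k) f2 = f2" "cmp f2 (e k) = f2" .
      from complete_orth_idems_refine[OF X ce k this] have "Suc n \<le> n"
        by (intro maximal) (auto simp: has_family_def)
      then show False by simp
    qed
    ultimately show ?thesis unfolding indecomposable_def using S(1)[OF k] by blast
  qed
  then show ?thesis using nb by blast
qed

theorem krull_schmidt_criterion:
  assumes "idems_split D" "orth_idems_bounded D" "endos_algebraic D"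
  shows "krull_schmidt D"
  unfolding krull_schmidt_def
  using exists_indecomposable_decomposition[OF assms(1,2)] local_end_if_indecomposable[OF assms(1,3)] by blast

end

section \<open>Linear Abelian categories\<close>

lemma hom_vector_spaces_if_linear_homs: "linear_homs C \<Longrightarrow> hom_vector_spaces C"
  unfolding linear_homs_def hom_vector_spaces_def
  by (intro ballI, drule bspec, assumption, drule bspec, assumption, elim conjE, intro conjI; assumption)

lemma linear_cat_if_linear_abelian: "linear_abelian_cat C \<Longrightarrow> linear_cat C"
  unfolding linear_abelian_cat_def linear_cat_def using hom_vector_spaces_if_linear_homs by blast

context linear_cat
begin

lemma idempotent_splits_if_kernel:
  assumes X: "X \<in> Ob" and e: "e \<in> Hom X X" and ee: "cmp e e = e" and k: "is_kernel D (id_minus X e) k"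
  shows "\<exists>A \<iota> \<pi>. A \<in> Ob \<and> \<iota> \<in> Hom A X \<and> \<pi> \<in> Hom X A \<and> cmp \<pi> \<iota> = idm A \<and> cmp \<iota> \<pi> = e"
proof -
  define u where "u = id_minus X e"
  have uH: "u \<in> Hom X X" using id_minus_hom[OF X e] by (simp add: u_def)
  note cf = complement_idempotent[OF X e ee, folded u_def]
  define K where "K = cDom D k"
  have kM: "k \<in> cMor D" and kc: "cCod D k = X" and uk: "cmp u k = zr K X"
    and univ: "\<And>g. g \<in> cMor D \<Longrightarrow> cCod D g = X \<Longrightarrow> cmp u g = zr (cDom D g) X \<Longrightarrow>
        \<exists>!h. h \<in> Hom (cDom D g) K \<and> cmp k h = g"
    using k hom_dom[OF uH] hom_cod[OF uH] unfolding is_kernel_def K_def u_def by auto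
  have kH: "k \<in> Hom K X" using kM kc unfolding hom_def K_def by simp
  have K: "K \<in> Ob" using hom_dom_ob[OF kH] .
  obtain r where r: "r \<in> Hom X K" "cmp k r = e"
    using univ[OF hom_mor[OF e] hom_cod[OF e]] cf(2) hom_dom[OF e] by auto
  have "cmp u k = ad k (sm (-1) (cmp e k))"
    unfolding u_def using add_comp[OF kH id_hom[OF X] sm_hom[OF e]] sm_comp[OF kH e] id_comp[OF kH] by simp
  then have ek: "cmp e k = k" using eq_if_diff_zero[OF kH comp_hom[OF kH e]] uk by simp
  have "cmp k (cmp r k) = k" using assoc[OF kH r(1) kH] r(2) ek by simp
  moreover have "\<exists>!h. h \<in> Hom K K \<and> cmp k h = k" using univ[OF kM kc] uk unfolding K_def by simp
  ultimately have "cmp r k = idm K" using comp_hom[OF kH r(1)] id_hom[OF K] comp_id[OF kH] by blast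
  then show ?thesis using K kH r by blast
qed

lemma idems_split_if_kernels:
  assumes "\<forall>f\<in>cMor D. \<exists>k. is_kernel D f k"
  shows "idems_split D"
  unfolding idems_split_def
  using idempotent_splits_if_kernel assms hom_mor[OF id_minus_hom] by blast

end

locale fd_linear_cat = linear_cat D for D :: "('o, 'm, 'k::field) lcat" +
  assumes fin: "linear_homs D"
begin

lemma hom_sum_map: "hom_sum D g (map h ks) X Y = hom_sum D (\<lambda>i. g (h i)) ks X Y"
  by (induction ks) auto

lemma lin_comb_eq_hom_sum:
  "length cs = length bs \<Longrightarrow>
    lin_comb D X Y bs cs = hom_sum D (\<lambda>j. sm (cs ! j) (bs ! j)) [0..<length bs] X Y"
proof (induction bs arbitrary: cs)
  case Nil then show ?case by (simp add: lin_comb_def)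
next
  case (Cons b bs)
  then obtain c cs' where cs: "cs = c # cs'" "length cs' = length bs" by (cases cs) auto
  have "[0..<length (b # bs)] = 0 # map Suc [0..<length bs]"
    by (simp add: map_Suc_upt upt_conv_Cons del: upt_Suc)
  then show ?case using Cons.IH[OF cs(2)] cs by (simp add: lin_comb_def hom_sum_map)
qed

definition coord_comb :: "'m list \<Rightarrow> (nat \<Rightarrow> 'k) \<Rightarrow> 'o \<Rightarrow> 'o \<Rightarrow> 'm" where
  "coord_comb bs w X Y = hom_sum D (\<lambda>j. sm (w j) (bs ! j)) [0..<length bs] X Y"

lemma coord_comb_hom:
  assumes "X \<in> Ob" "Y \<in> Ob" "set bs \<subseteq> Hom X Y"
  shows "coord_comb bs w X Y \<in> Hom X Y"
  unfolding coord_comb_def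
  by (rule hom_sum_hom[OF assms(1,2)]) (use sm_hom[OF subsetD[OF assms(3) nth_mem]] in auto)

lemma coord_comb_zero:
  assumes "X \<in> Ob" "Y \<in> Ob" "set bs \<subseteq> Hom X Y"
  shows "coord_comb bs (\<lambda>_. 0) X Y = zr X Y"
  unfolding coord_comb_def
  by (rule hom_sum_zero[OF assms(1,2)]) (use zero_sm[OF subsetD[OF assms(3) nth_mem]] in auto)

lemma hom_coordinates:
  assumes "X \<in> Ob" "Y \<in> Ob"
  obtains bs where "set bs \<subseteq> Hom X Y"
    "\<And>f. f \<in> Hom X Y \<Longrightarrow> \<exists>w. (\<forall>j\<ge>length bs. w j = 0) \<and> f = coord_comb bs w X Y"
proof -
  have "\<exists>bs. set bs \<subseteq> Hom X Y \<and> (\<forall>f\<in>Hom X Y. \<exists>cs. length cs = length bs \<and> f = lin_comb D X Y bs cs)"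
    using bspec[OF bspec[OF fin[unfolded linear_homs_def] assms(1)] assms(2)] by (elim conjE)
  then obtain bs where bs: "set bs \<subseteq> Hom X Y" "\<forall>f\<in>Hom X Y. \<exists>cs. length cs = length bs \<and> f = lin_comb D X Y bs cs"
    by blast
  have "\<exists>w. (\<forall>j\<ge>length bs. w j = 0) \<and> f = coord_comb bs w X Y" if f: "f \<in> Hom X Y" for f
  proof -
    obtain cs where cs: "length cs = length bs" "f = lin_comb D X Y bs cs" using bs(2) f by blast
    define w where "w j = (if j < length bs then cs ! j else 0)" for j
    have "f = coord_comb bs w X Y"
      unfolding cs(2) lin_comb_eq_hom_sum[OF cs(1)] coord_comb_def by (rule hom_sum_cong) (auto simp: w_def)
    then show ?thesis by (intro exI[of _ w]) (auto simp: w_def)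
  qed
  then show ?thesis using that bs(1) by blast
qed

lemma hom_sum_sm_coord_comb:
  assumes X: "X \<in> Ob" "Y \<in> Ob" and bs: "set bs \<subseteq> Hom X Y"
  shows "hom_sum D (\<lambda>i. sm (c i) (coord_comb bs (W i) X Y)) [0..<n] X Y
    = coord_comb bs (\<lambda>j. \<Sum>i<n. c i * W i j) X Y"
proof (induction n)
  case 0
  then show ?case using coord_comb_zero[OF assms] by simp
next
  case (Suc n)
  have bH: "\<And>j. j \<in> set [0..<length bs] \<Longrightarrow> bs ! j \<in> Hom X Y" using bs by auto
  note cH = coord_comb_hom[OF assms]
  have "hom_sum D (\<lambda>i. sm (c i) (coord_comb bs (W i) X Y)) [0..<Suc n] X Y =
      ad (coord_comb bs (\<lambda>j. \<Sum>i<n. c i * W i j) X Y) (sm (c n) (coord_comb bs (W n) X Y))"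
    using hom_sum_append[OF X, where g="\<lambda>i. sm (c i) (coord_comb bs (W i) X Y)" and xs="[0..<n]" and ys="[n]"]
      Suc sm_hom[OF cH] add_zero[OF sm_hom[OF cH]] by simp
  also have "sm (c n) (coord_comb bs (W n) X Y) = coord_comb bs (\<lambda>j. c n * W n j) X Y"
    unfolding coord_comb_def
    by (subst hom_sum_sm[OF X]) (auto intro!: hom_sum_cong simp: sm_sm[OF bH] bH sm_hom)
  also have "ad (coord_comb bs (\<lambda>j. \<Sum>i<n. c i * W i j) X Y) (coord_comb bs (\<lambda>j. c n * W n j) X Y)
      = coord_comb bs (\<lambda>j. \<Sum>i<Suc n. c i * W i j) X Y"
    unfolding coord_comb_def
    by (subst hom_sum_add[OF X, symmetric]) (auto intro!: hom_sum_cong simp: add_sm[OF bH] bH sm_hom)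
  finally show ?case .
qed

lemma hom_linear_relation:
  assumes X: "X \<in> Ob" "Y \<in> Ob"
  obtains d where "\<And>n v. d < n \<Longrightarrow> (\<And>i. i < n \<Longrightarrow> v i \<in> Hom X Y) \<Longrightarrow>
    \<exists>c. (\<exists>i<n. c i \<noteq> 0) \<and> hom_sum D (\<lambda>i. sm (c i) (v i)) [0..<n] X Y = zr X Y"
proof -
  obtain bs where bs: "set bs \<subseteq> Hom X Y"
    "\<And>f. f \<in> Hom X Y \<Longrightarrow> \<exists>w. (\<forall>j\<ge>length bs. w j = 0) \<and> f = coord_comb bs w X Y"
    using hom_coordinates[OF X] by blast
  have "\<exists>c. (\<exists>i<n. c i \<noteq> 0) \<and> hom_sum D (\<lambda>i. sm (c i) (v i)) [0..<n] X Y = zr X Y"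
    if n: "length bs < n" and v: "\<And>i. i < n \<Longrightarrow> v i \<in> Hom X Y" for n v
  proof -
    have "\<forall>i. \<exists>w. i < n \<longrightarrow> (\<forall>j\<ge>length bs. w j = 0) \<and> v i = coord_comb bs w X Y"
      using bs(2) v by blast
    then obtain W where W: "\<And>i. i < n \<Longrightarrow> (\<forall>j\<ge>length bs. W i j = 0) \<and> v i = coord_comb bs (W i) X Y"
      by (metis choice)
    obtain c where c: "\<exists>i<n. c i \<noteq> 0" "\<forall>j. (\<Sum>i<n. c i * W i j) = 0"
      using nontrivial_relation_if_supported_below[of n "length bs" W] W n by blast
    have "hom_sum D (\<lambda>i. sm (c i) (v i)) [0..<n] X Y
        = hom_sum D (\<lambda>i. sm (c i) (coord_comb bs (W i) X Y)) [0..<n] X Y"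
      by (rule hom_sum_cong) (use W in auto)
    also have "\<dots> = zr X Y"
      using hom_sum_sm_coord_comb[OF X bs(1)] c(2) coord_comb_zero[OF X bs(1)] by simp
    finally show ?thesis using c(1) by blast
  qed
  then show ?thesis using that by blast
qed

text \<open>Multiplying a relation among orthogonal idempotents by one of them isolates its coefficient.\<close>

lemma orth_idems_bounded: "orth_idems_bounded D"
  unfolding orth_idems_bounded_def
proof
  fix X assume X: "X \<in> Ob"
  obtain d where d: "\<And>n v. d < n \<Longrightarrow> (\<And>i. i < n \<Longrightarrow> v i \<in> Hom X X) \<Longrightarrow>
      \<exists>c. (\<exists>i<n. c i \<noteq> 0) \<and> hom_sum D (\<lambda>i. sm (c i) (v i)) [0..<n] X X = zr X X"
    using hom_linear_relation[OF X X] by blast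
  have "card K \<le> d" if K: "finite K" and oe: "orth_idems D X K e" for K e
  proof (rule ccontr)
    assume "\<not> card K \<le> d"
    obtain h where h: "bij_betw h {0..<card K} K" using ex_bij_betw_nat_finite[OF K] by blast
    define v where "v i = e (h i)" for i
    have hK: "i < card K \<Longrightarrow> h i \<in> K" for i using h unfolding bij_betw_def by auto
    have hinj: "i < card K \<Longrightarrow> j < card K \<Longrightarrow> i \<noteq> j \<Longrightarrow> h i \<noteq> h j" for i j
      using h unfolding bij_betw_def inj_on_def by auto
    have vH: "\<And>i. i < card K \<Longrightarrow> v i \<in> Hom X X" and vI: "\<And>i. i < card K \<Longrightarrow> cmp (v i) (v i) = v i"
      and vN: "\<And>i. i < card K \<Longrightarrow> v i \<noteq> zr X X"
      and vO: "\<And>i j. i < card K \<Longrightarrow> j < card K \<Longrightarrow> i \<noteq> j \<Longrightarrow> cmp (v i) (v j) = zr X X"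
      using oe hK hinj unfolding orth_idems_def v_def by auto
    have "d < card K" using \<open>\<not> card K \<le> d\<close> by simp
    from d[of "card K" v, OF this vH] obtain c j where c: "j < card K" "c j \<noteq> 0"
      "hom_sum D (\<lambda>i. sm (c i) (v i)) [0..<card K] X X = zr X X" by blast
    have "zr X X = cmp (v j) (hom_sum D (\<lambda>i. sm (c i) (v i)) [0..<card K] X X)"
      using c(3) comp_zero[OF vH[OF c(1)] X] by simp
    also have "\<dots> = hom_sum D (\<lambda>i. cmp (v j) (sm (c i) (v i))) [0..<card K] X X"
      by (rule hom_sum_comp_l[OF vH[OF c(1)] X]) (use vH sm_hom in auto)
    also have "\<dots> = cmp (v j) (sm (c j) (v j))"
    proof (rule hom_sum_single[OF X X])
      show "\<forall>k\<in>set [0..<card K]. k \<noteq> j \<longrightarrow> cmp (v j) (sm (c k) (v k)) = zr X X"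
        using comp_sm[OF vH vH[OF c(1)]] vO[OF c(1)] sm_zero[OF X X] by auto
      show "cmp (v j) (sm (c j) (v j)) \<in> Hom X X" using comp_hom[OF sm_hom vH] vH c(1) by blast
    qed (use c(1) in auto)
    also have "\<dots> = sm (c j) (v j)" using comp_sm[OF vH[OF c(1)] vH[OF c(1)]] vI[OF c(1)] by simp
    finally have "v j = zr X X" using sm_eq_zeroD[OF vH[OF c(1)] _ c(2)] by simp
    with vN[OF c(1)] show False by simp
  qed
  then show "\<exists>N. \<forall>K e. finite K \<longrightarrow> orth_idems D X K e \<longrightarrow> card K \<le> N" by blast
qed

lemma poly_eval_sum_monom:
  assumes X: "X \<in> Ob" and f: "f \<in> Hom X X"
  shows "poly_eval D X (\<Sum>i<n. monom (c i) i) f = hom_sum D (\<lambda>i. sm (c i) (poly_eval D X (monom 1 i) f)) [0..<n] X X"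
proof (induction n)
  case 0 then show ?case by simp
next
  case (Suc n)
  note pH = poly_eval_hom[OF X f]
  have "poly_eval D X (monom (c n) n) f = sm (c n) (poly_eval D X (monom 1 n) f)"
    using poly_eval_smult[OF X f, of "c n" "monom 1 n"] by (simp add: smult_monom)
  then show ?case
    using Suc hom_sum_append[OF X X, where g="\<lambda>i. sm (c i) (poly_eval D X (monom 1 i) f)" and xs="[0..<n]" and ys="[n]"]
      sm_hom pH add_zero[OF sm_hom[OF pH]] by (simp add: poly_eval_add[OF X f])
qed

text \<open>The powers of f are linearly dependent.\<close>

lemma endos_algebraic: "endos_algebraic D"
  unfolding endos_algebraic_def
proof (intro ballI)
  fix X f assume X: "X \<in> Ob" and f: "f \<in> Hom X X"
  obtain d where d: "\<And>n v. d < n \<Longrightarrow> (\<And>i. i < n \<Longrightarrow> v i \<in> Hom X X) \<Longrightarrow>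
      \<exists>c. (\<exists>i<n. c i \<noteq> 0) \<and> hom_sum D (\<lambda>i. sm (c i) (v i)) [0..<n] X X = zr X X"
    using hom_linear_relation[OF X X] by blast
  obtain c i where c: "i < Suc d" "c i \<noteq> 0"
    "hom_sum D (\<lambda>i. sm (c i) (poly_eval D X (monom 1 i) f)) [0..<Suc d] X X = zr X X"
    using d[of "Suc d" "\<lambda>i. poly_eval D X (monom 1 i) f"] poly_eval_hom[OF X f] by blast
  define P where "P = (\<Sum>i<Suc d. monom (c i) i)"
  have "coeff P i = c i" unfolding P_def coeff_sum using c(1) by (simp add: coeff_monom)
  then have "P \<noteq> 0" using c(2) by auto
  moreover have "poly_eval D X P f = zr X X" unfolding P_def poly_eval_sum_monom[OF X f] using c(3) .
  ultimately show "\<exists>P. P \<noteq> 0 \<and> poly_eval D X P f = zr X X" by blast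
qed

end

section \<open>Tempered persistence objects\<close>

context linear_cat
begin

abbreviation "Pers L \<equiv> tempered_pers_cat D L"

lemma tempered_pers_cat_simps[simp]:
  "cObj (Pers L) = {P. pers_obj D L P \<and> tempered D P}"
  "cDom (Pers L) m = fst m" "cCod (Pers L) m = fst (snd m)"
  "cComp (Pers L) (Q', R, g) (P, Q, f) = (P, R, \<lambda>p. cmp (g p) (f p))"
  "cId (Pers L) P = (P, P, \<lambda>p. idm (fst P p))"
  "cAdd (Pers L) (P, Q, f) (P', Q', g) = (P, Q, \<lambda>p. ad (f p) (g p))"
  "cZero (Pers L) P Q = (P, Q, \<lambda>p. zr (fst P p) (fst Q p))"
  "cSmul (Pers L) a (P, Q, f) = (P, Q, \<lambda>p. sm a (f p))"
  by (simp_all add: tempered_pers_cat_def)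

lemma hom_Pers_iff: "m \<in> hom (Pers L) P Q \<longleftrightarrow>
    (\<exists>f. m = (P, Q, f) \<and> P \<in> cObj (Pers L) \<and> Q \<in> cObj (Pers L) \<and> pers_mor D L P Q f)"
  unfolding hom_def tempered_pers_cat_def by auto

lemma pers_obj_ob: "pers_obj D L P \<Longrightarrow> fst P p \<in> Ob" by (simp add: pers_obj_def)
lemma pers_obj_map_L: "pers_obj D L P \<Longrightarrow> p \<in> L \<Longrightarrow> snd P p \<in> Hom (fst P p) (fst P (p - 1))"
  unfolding pers_obj_def by (metis (full_types))
lemma pers_obj_map_notL: "pers_obj D L P \<Longrightarrow> p \<notin> L \<Longrightarrow> snd P p \<in> Hom (fst P (p - 1)) (fst P p)"
  unfolding pers_obj_def by (metis (full_types))
lemma pers_mor_hom: "pers_mor D L P Q f \<Longrightarrow> f p \<in> Hom (fst P p) (fst Q p)" by (simp add: pers_mor_def)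
lemma pers_mor_L: "pers_mor D L P Q f \<Longrightarrow> p \<in> L \<Longrightarrow> cmp (f (p - 1)) (snd P p) = cmp (snd Q p) (f p)"
  unfolding pers_mor_def by (metis (full_types))
lemma pers_mor_notL: "pers_mor D L P Q f \<Longrightarrow> p \<notin> L \<Longrightarrow> cmp (f p) (snd P p) = cmp (snd Q p) (f (p - 1))"
  unfolding pers_mor_def by (metis (full_types))
lemma pers_morI:
  assumes "\<And>p. f p \<in> Hom (fst P p) (fst Q p)"
    "\<And>p. p \<in> L \<Longrightarrow> cmp (f (p - 1)) (snd P p) = cmp (snd Q p) (f p)"
    "\<And>p. p \<notin> L \<Longrightarrow> cmp (f p) (snd P p) = cmp (snd Q p) (f (p - 1))"
  shows "pers_mor D L P Q f"
  unfolding pers_mor_def using assms by auto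

lemma pers_mor_comp:
  assumes P: "pers_obj D L P" and Q: "pers_obj D L Q" and R: "pers_obj D L R"
    and f: "pers_mor D L P Q f" and g: "pers_mor D L Q R g"
  shows "pers_mor D L P R (\<lambda>p. cmp (g p) (f p))"
proof (rule pers_morI)
  fix p
  note fh = pers_mor_hom[OF f] and gh = pers_mor_hom[OF g]
  show "cmp (g p) (f p) \<in> Hom (fst P p) (fst R p)" using comp_hom[OF fh gh] .
  {
    assume p: "p \<in> L"
    note x = pers_obj_map_L[OF P p] and y = pers_obj_map_L[OF Q p] and z = pers_obj_map_L[OF R p]
    have "cmp (cmp (g (p - 1)) (f (p - 1))) (snd P p) = cmp (g (p - 1)) (cmp (f (p - 1)) (snd P p))"
      using assoc[OF x fh gh] by simp
    also have "\<dots> = cmp (g (p - 1)) (cmp (snd Q p) (f p))" using pers_mor_L[OF f p] by simp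
    also have "\<dots> = cmp (cmp (g (p - 1)) (snd Q p)) (f p)" using assoc[OF fh y gh] by simp
    also have "\<dots> = cmp (cmp (snd R p) (g p)) (f p)" using pers_mor_L[OF g p] by simp
    also have "\<dots> = cmp (snd R p) (cmp (g p) (f p))" using assoc[OF fh gh z] by simp
    finally show "cmp (cmp (g (p - 1)) (f (p - 1))) (snd P p) = cmp (snd R p) (cmp (g p) (f p))" .
  }
  {
    assume p: "p \<notin> L"
    note x = pers_obj_map_notL[OF P p] and y = pers_obj_map_notL[OF Q p] and z = pers_obj_map_notL[OF R p]
    have "cmp (cmp (g p) (f p)) (snd P p) = cmp (g p) (cmp (f p) (snd P p))"
      using assoc[OF x fh gh] by simp
    also have "\<dots> = cmp (g p) (cmp (snd Q p) (f (p - 1)))" using pers_mor_notL[OF f p] by simp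
    also have "\<dots> = cmp (cmp (g p) (snd Q p)) (f (p - 1))" using assoc[OF fh y gh] by simp
    also have "\<dots> = cmp (cmp (snd R p) (g (p - 1))) (f (p - 1))" using pers_mor_notL[OF g p] by simp
    also have "\<dots> = cmp (snd R p) (cmp (g (p - 1)) (f (p - 1)))" using assoc[OF fh gh z] by simp
    finally show "cmp (cmp (g p) (f p)) (snd P p) = cmp (snd R p) (cmp (g (p - 1)) (f (p - 1)))" .
  }
qed

lemma pers_mor_id: assumes P: "pers_obj D L P" shows "pers_mor D L P P (\<lambda>p. idm (fst P p))"
proof (rule pers_morI)
  fix p
  show "idm (fst P p) \<in> Hom (fst P p) (fst P p)" using pers_obj_ob[OF P] by simp
  show "cmp (idm (fst P (p - 1))) (snd P p) = cmp (snd P p) (idm (fst P p))" if "p \<in> L"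
    using pers_obj_map_L[OF P that] by simp
  show "cmp (idm (fst P p)) (snd P p) = cmp (snd P p) (idm (fst P (p - 1)))" if "p \<notin> L"
    using pers_obj_map_notL[OF P that] by simp
qed

lemma pers_mor_zero: assumes P: "pers_obj D L P" and Q: "pers_obj D L Q"
  shows "pers_mor D L P Q (\<lambda>p. zr (fst P p) (fst Q p))"
proof (rule pers_morI)
  fix p
  show "zr (fst P p) (fst Q p) \<in> Hom (fst P p) (fst Q p)" using pers_obj_ob[OF P] pers_obj_ob[OF Q] by simp
  show "cmp (zr (fst P (p - 1)) (fst Q (p - 1))) (snd P p) = cmp (snd Q p) (zr (fst P p) (fst Q p))" if "p \<in> L"
    using zero_comp[OF pers_obj_map_L[OF P that] pers_obj_ob[OF Q]] comp_zero[OF pers_obj_map_L[OF Q that] pers_obj_ob[OF P]] by simp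
  show "cmp (zr (fst P p) (fst Q p)) (snd P p) = cmp (snd Q p) (zr (fst P (p - 1)) (fst Q (p - 1)))" if "p \<notin> L"
    using zero_comp[OF pers_obj_map_notL[OF P that] pers_obj_ob[OF Q]] comp_zero[OF pers_obj_map_notL[OF Q that] pers_obj_ob[OF P]] by simp
qed

lemma pers_mor_add: assumes P: "pers_obj D L P" and Q: "pers_obj D L Q"
  and f: "pers_mor D L P Q f" and g: "pers_mor D L P Q g"
  shows "pers_mor D L P Q (\<lambda>p. ad (f p) (g p))"
proof (rule pers_morI)
  fix p
  note fh = pers_mor_hom[OF f] and gh = pers_mor_hom[OF g]
  show "ad (f p) (g p) \<in> Hom (fst P p) (fst Q p)" using add_hom[OF fh gh] .
  show "cmp (ad (f (p - 1)) (g (p - 1))) (snd P p) = cmp (snd Q p) (ad (f p) (g p))" if "p \<in> L"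
    using add_comp[OF pers_obj_map_L[OF P that] fh gh] comp_add[OF fh gh pers_obj_map_L[OF Q that]] pers_mor_L[OF f that] pers_mor_L[OF g that]
    by simp
  show "cmp (ad (f p) (g p)) (snd P p) = cmp (snd Q p) (ad (f (p - 1)) (g (p - 1)))" if "p \<notin> L"
    using add_comp[OF pers_obj_map_notL[OF P that] fh gh] comp_add[OF fh gh pers_obj_map_notL[OF Q that]] pers_mor_notL[OF f that] pers_mor_notL[OF g that]
    by simp
qed

lemma pers_mor_sm: assumes P: "pers_obj D L P" and Q: "pers_obj D L Q"
  and f: "pers_mor D L P Q f"
  shows "pers_mor D L P Q (\<lambda>p. sm a (f p))"
proof (rule pers_morI)
  fix p
  note fh = pers_mor_hom[OF f]
  show "sm a (f p) \<in> Hom (fst P p) (fst Q p)" using sm_hom[OF fh] .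
  show "cmp (sm a (f (p - 1))) (snd P p) = cmp (snd Q p) (sm a (f p))" if "p \<in> L"
    using sm_comp[OF pers_obj_map_L[OF P that] fh] comp_sm[OF fh pers_obj_map_L[OF Q that]] pers_mor_L[OF f that] by simp
  show "cmp (sm a (f p)) (snd P p) = cmp (snd Q p) (sm a (f (p - 1)))" if "p \<notin> L"
    using sm_comp[OF pers_obj_map_notL[OF P that] fh] comp_sm[OF fh pers_obj_map_notL[OF Q that]] pers_mor_notL[OF f that] by simp
qed

lemma is_category_Pers: "is_category (Pers L)"
  unfolding is_category_def
proof (intro conjI ballI)
  fix f assume "f \<in> cMor (Pers L)"
  then show "cDom (Pers L) f \<in> cObj (Pers L)"
    by (auto simp: tempered_pers_cat_def)
next
  fix f assume "f \<in> cMor (Pers L)"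
  then show "cCod (Pers L) f \<in> cObj (Pers L)"
    by (auto simp: tempered_pers_cat_def)
next
  fix X assume "X \<in> cObj (Pers L)"
  then show "cId (Pers L) X \<in> hom (Pers L) X X" using pers_mor_id by (auto simp: hom_Pers_iff)
next
  fix X Y Z f g assume o: "X \<in> cObj (Pers L)" "Y \<in> cObj (Pers L)" "Z \<in> cObj (Pers L)"
    and fg: "f \<in> hom (Pers L) X Y" "g \<in> hom (Pers L) Y Z"
  then obtain f' g' where e: "f = (X, Y, f')" "g = (Y, Z, g')" and m: "pers_mor D L X Y f'" "pers_mor D L Y Z g'"
    by (auto simp: hom_Pers_iff)
  have "pers_mor D L X Z (\<lambda>p. cmp (g' p) (f' p))" by (rule pers_mor_comp) (use o m in auto)
  then show "cComp (Pers L) g f \<in> hom (Pers L) X Z" using o e by (auto simp: hom_Pers_iff)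
next
  fix W X Y Z f g h assume o: "W \<in> cObj (Pers L)" "X \<in> cObj (Pers L)" "Y \<in> cObj (Pers L)" "Z \<in> cObj (Pers L)"
    and fgh: "f \<in> hom (Pers L) W X" "g \<in> hom (Pers L) X Y" "h \<in> hom (Pers L) Y Z"
  then obtain f' g' h' where e: "f = (W, X, f')" "g = (X, Y, g')" "h = (Y, Z, h')"
    and m: "pers_mor D L W X f'" "pers_mor D L X Y g'" "pers_mor D L Y Z h'"
    by (auto simp: hom_Pers_iff)
  show "cComp (Pers L) h (cComp (Pers L) g f) = cComp (Pers L) (cComp (Pers L) h g) f"
    using e assoc[OF pers_mor_hom[OF m(1)] pers_mor_hom[OF m(2)] pers_mor_hom[OF m(3)]] by simp
next
  fix X Y f assume o: "X \<in> cObj (Pers L)" "Y \<in> cObj (Pers L)" and f: "f \<in> hom (Pers L) X Y"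
  then obtain f' where e: "f = (X, Y, f')" and m: "pers_mor D L X Y f'" by (auto simp: hom_Pers_iff)
  show "cComp (Pers L) f (cId (Pers L) X) = f"
    using e comp_id[OF pers_mor_hom[OF m]] by simp
next
  fix X Y f assume o: "X \<in> cObj (Pers L)" "Y \<in> cObj (Pers L)" and f: "f \<in> hom (Pers L) X Y"
  then obtain f' where e: "f = (X, Y, f')" and m: "pers_mor D L X Y f'" by (auto simp: hom_Pers_iff)
  show "cComp (Pers L) (cId (Pers L) Y) f = f"
    using e id_comp[OF pers_mor_hom[OF m]] by simp
qed

lemma hom_vector_spaces_Pers: "hom_vector_spaces (Pers L)"
  unfolding hom_vector_spaces_def
proof (intro ballI)
  fix X Y assume o: "X \<in> cObj (Pers L)" "Y \<in> cObj (Pers L)"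
  have PX: "pers_obj D L X" "pers_obj D L Y" using o by auto
  have B: "(\<forall>f\<in>hom (Pers L) X Y. R f) \<longleftrightarrow> (\<forall>f. pers_mor D L X Y f \<longrightarrow> R (X, Y, f))" for R
    using o by (auto simp: hom_Pers_iff)
  show "cZero (Pers L) X Y \<in> hom (Pers L) X Y \<and>
   (\<forall>f\<in>hom (Pers L) X Y. \<forall>g\<in>hom (Pers L) X Y. cAdd (Pers L) f g \<in> hom (Pers L) X Y) \<and>
   (\<forall>a. \<forall>f\<in>hom (Pers L) X Y. cSmul (Pers L) a f \<in> hom (Pers L) X Y) \<and>
   (\<forall>f\<in>hom (Pers L) X Y. \<forall>g\<in>hom (Pers L) X Y. \<forall>h\<in>hom (Pers L) X Y.
      cAdd (Pers L) (cAdd (Pers L) f g) h = cAdd (Pers L) f (cAdd (Pers L) g h)) \<and>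
   (\<forall>f\<in>hom (Pers L) X Y. \<forall>g\<in>hom (Pers L) X Y. cAdd (Pers L) f g = cAdd (Pers L) g f) \<and>
   (\<forall>f\<in>hom (Pers L) X Y. cAdd (Pers L) f (cZero (Pers L) X Y) = f) \<and>
   (\<forall>f\<in>hom (Pers L) X Y. cAdd (Pers L) f (cSmul (Pers L) (-1) f) = cZero (Pers L) X Y) \<and>
   (\<forall>f\<in>hom (Pers L) X Y. cSmul (Pers L) 1 f = f) \<and>
   (\<forall>a b. \<forall>f\<in>hom (Pers L) X Y. cSmul (Pers L) a (cSmul (Pers L) b f) = cSmul (Pers L) (a * b) f) \<and>
   (\<forall>a b. \<forall>f\<in>hom (Pers L) X Y. cSmul (Pers L) (a + b) f = cAdd (Pers L) (cSmul (Pers L) a f) (cSmul (Pers L) b f)) \<and>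
   (\<forall>a. \<forall>f\<in>hom (Pers L) X Y. \<forall>g\<in>hom (Pers L) X Y.
      cSmul (Pers L) a (cAdd (Pers L) f g) = cAdd (Pers L) (cSmul (Pers L) a f) (cSmul (Pers L) a g))"
    unfolding B
  proof (intro conjI allI impI)
    show "cZero (Pers L) X Y \<in> hom (Pers L) X Y" using o pers_mor_zero[OF PX] by (auto simp: hom_Pers_iff)
    fix f g h a b
    assume f: "pers_mor D L X Y f"
    note fh = pers_mor_hom[OF f]
    show "cSmul (Pers L) a (X, Y, f) \<in> hom (Pers L) X Y" using o pers_mor_sm[OF PX f] by (auto simp: hom_Pers_iff)
    show "cAdd (Pers L) (X, Y, f) (cZero (Pers L) X Y) = (X, Y, f)" using add_zero[OF fh] by simp
    show "cAdd (Pers L) (X, Y, f) (cSmul (Pers L) (-1) (X, Y, f)) = cZero (Pers L) X Y" using add_neg_self[OF fh] by simp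
    show "cSmul (Pers L) 1 (X, Y, f) = (X, Y, f)" using sm_one[OF fh] by simp
    show "cSmul (Pers L) a (cSmul (Pers L) b (X, Y, f)) = cSmul (Pers L) (a * b) (X, Y, f)" using sm_sm[OF fh] by simp
    show "cSmul (Pers L) (a + b) (X, Y, f) = cAdd (Pers L) (cSmul (Pers L) a (X, Y, f)) (cSmul (Pers L) b (X, Y, f))"
      using add_sm[OF fh] by simp
    assume g: "pers_mor D L X Y g"
    note gh = pers_mor_hom[OF g]
    show "cAdd (Pers L) (X, Y, f) (X, Y, g) \<in> hom (Pers L) X Y" using o pers_mor_add[OF PX f g] by (auto simp: hom_Pers_iff)
    show "cAdd (Pers L) (X, Y, f) (X, Y, g) = cAdd (Pers L) (X, Y, g) (X, Y, f)" using add_comm[OF fh gh] by simp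
    show "cSmul (Pers L) a (cAdd (Pers L) (X, Y, f) (X, Y, g)) =
        cAdd (Pers L) (cSmul (Pers L) a (X, Y, f)) (cSmul (Pers L) a (X, Y, g))" using sm_add[OF fh gh] by simp
    assume h: "pers_mor D L X Y h"
    show "cAdd (Pers L) (cAdd (Pers L) (X, Y, f) (X, Y, g)) (X, Y, h) = cAdd (Pers L) (X, Y, f) (cAdd (Pers L) (X, Y, g) (X, Y, h))"
      using add_assoc[OF fh gh pers_mor_hom[OF h]] by simp
  qed
qed

lemma bilinear_comp_Pers: "bilinear_comp (Pers L)"
  unfolding bilinear_comp_def
proof (intro ballI allI conjI)
  fix X Y Z f f' g g' a
  assume o: "X \<in> cObj (Pers L)" "Y \<in> cObj (Pers L)" "Z \<in> cObj (Pers L)"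
    and h: "f \<in> hom (Pers L) X Y" "f' \<in> hom (Pers L) X Y" "g \<in> hom (Pers L) Y Z" "g' \<in> hom (Pers L) Y Z"
  then obtain F F' G G' where e: "f = (X, Y, F)" "f' = (X, Y, F')" "g = (Y, Z, G)" "g' = (Y, Z, G')"
    and m: "pers_mor D L X Y F" "pers_mor D L X Y F'" "pers_mor D L Y Z G" "pers_mor D L Y Z G'"
    by (auto simp: hom_Pers_iff)
  note hs = pers_mor_hom[OF m(1)] pers_mor_hom[OF m(2)] pers_mor_hom[OF m(3)] pers_mor_hom[OF m(4)]
  show "cComp (Pers L) g (cAdd (Pers L) f f') = cAdd (Pers L) (cComp (Pers L) g f) (cComp (Pers L) g f')"
    using e comp_add[OF hs(1) hs(2) hs(3)] by simp
  show "cComp (Pers L) (cAdd (Pers L) g g') f = cAdd (Pers L) (cComp (Pers L) g f) (cComp (Pers L) g' f)"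
    using e add_comp[OF hs(1) hs(3) hs(4)] by simp
  show "cComp (Pers L) g (cSmul (Pers L) a f) = cSmul (Pers L) a (cComp (Pers L) g f)"
    using e comp_sm[OF hs(1) hs(3)] by simp
  show "cComp (Pers L) (cSmul (Pers L) a g) f = cSmul (Pers L) a (cComp (Pers L) g f)"
    using e sm_comp[OF hs(1) hs(3)] by simp
qed

lemma linear_cat_Pers: "linear_cat (Pers L)"
  unfolding linear_cat_def using is_category_Pers hom_vector_spaces_Pers bilinear_comp_Pers by blast

lemma tempered_window:
  assumes "tempered D P"
  obtains lo hi where "lo \<le> hi" "\<And>p. p \<le> lo \<or> hi < p \<Longrightarrow> is_iso D (snd P p)"
proof -
  obtain k where k: "abs ` {p. \<not> is_iso D (snd P p)} \<subseteq> {..k}"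
    using assms finite_int_iff_bounded_le unfolding tempered_def by blast
  show ?thesis
  proof (rule that[of "- \<bar>k\<bar> - 1" "\<bar>k\<bar>"])
    fix p assume "p \<le> - \<bar>k\<bar> - 1 \<or> \<bar>k\<bar> < p"
    then show "is_iso D (snd P p)" using k by force
  qed simp
qed

lemma is_iso_iff: "f \<in> Hom X Y \<Longrightarrow> is_iso D f \<longleftrightarrow> (\<exists>g\<in>Hom Y X. cmp g f = idm X \<and> cmp f g = idm Y)"
  unfolding is_iso_def using hom_mor hom_dom hom_cod by metis

lemma zero_if_comp_iso_zero: assumes x: "x \<in> Hom U V" "is_iso D x" and g: "g \<in> Hom V W" and z: "cmp g x = zr U W"
  shows "g = zr V W"
proof -
  obtain y where y: "y \<in> Hom V U" "cmp y x = idm U" "cmp x y = idm V" using is_iso_iff[OF x(1)] x(2) by blast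
  have "g = cmp g (cmp x y)" using y(3) g by simp
  also have "\<dots> = cmp (cmp g x) y" using assoc[OF y(1) x(1) g] by simp
  also have "\<dots> = zr V W" using z zero_comp[OF y(1) hom_cod_ob[OF g]] by simp
  finally show ?thesis .
qed

lemma zero_if_iso_comp_zero: assumes y: "y \<in> Hom W' W" "is_iso D y" and g: "g \<in> Hom U W'" and z: "cmp y g = zr U W"
  shows "g = zr U W'"
proof -
  obtain yi where yi: "yi \<in> Hom W W'" "cmp yi y = idm W'" "cmp y yi = idm W" using is_iso_iff[OF y(1)] y(2) by blast
  have "g = cmp (cmp yi y) g" using yi(2) g by simp
  also have "\<dots> = cmp yi (cmp y g)" using assoc[OF g y(1) yi(1)] by simp
  also have "\<dots> = zr U W'" using z comp_zero[OF yi(1) hom_dom_ob[OF g]] by simp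
  finally show ?thesis .
qed

lemma pers_mor_zero_step_up:
  assumes P: "pers_obj D L P" and Q: "pers_obj D L Q" and g: "pers_mor D L P Q g"
    and i: "is_iso D (snd P p)" "is_iso D (snd Q p)" and z: "g (p - 1) = zr (fst P (p - 1)) (fst Q (p - 1))"
  shows "g p = zr (fst P p) (fst Q p)"
proof (cases "p \<in> L")
  case True
  have "cmp (snd Q p) (g p) = zr (fst P p) (fst Q (p - 1))"
    using pers_mor_L[OF g True] z zero_comp[OF pers_obj_map_L[OF P True] pers_obj_ob[OF Q]] by simp
  then show ?thesis using zero_if_iso_comp_zero[OF pers_obj_map_L[OF Q True] i(2) pers_mor_hom[OF g]] by blast
next
  case False
  have "cmp (g p) (snd P p) = zr (fst P (p - 1)) (fst Q p)"
    using pers_mor_notL[OF g False] z comp_zero[OF pers_obj_map_notL[OF Q False] pers_obj_ob[OF P]] by simp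
  then show ?thesis using zero_if_comp_iso_zero[OF pers_obj_map_notL[OF P False] i(1) pers_mor_hom[OF g]] by blast
qed

lemma pers_mor_zero_step_down:
  assumes P: "pers_obj D L P" and Q: "pers_obj D L Q" and g: "pers_mor D L P Q g"
    and i: "is_iso D (snd P p)" "is_iso D (snd Q p)" and z: "g p = zr (fst P p) (fst Q p)"
  shows "g (p - 1) = zr (fst P (p - 1)) (fst Q (p - 1))"
proof (cases "p \<in> L")
  case True
  have "cmp (g (p - 1)) (snd P p) = zr (fst P p) (fst Q (p - 1))"
    using pers_mor_L[OF g True] z comp_zero[OF pers_obj_map_L[OF Q True] pers_obj_ob[OF P]] by simp
  then show ?thesis using zero_if_comp_iso_zero[OF pers_obj_map_L[OF P True] i(1) pers_mor_hom[OF g]] by blast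
next
  case False
  have "cmp (snd Q p) (g (p - 1)) = zr (fst P (p - 1)) (fst Q p)"
    using pers_mor_notL[OF g False] z zero_comp[OF pers_obj_map_notL[OF P False] pers_obj_ob[OF Q]] by simp
  then show ?thesis using zero_if_iso_comp_zero[OF pers_obj_map_notL[OF Q False] i(2) pers_mor_hom[OF g]] by blast
qed

text \<open>Outside the window all structure maps are isomorphisms, so vanishing propagates outwards.\<close>

lemma pers_mor_zero_if_zero_on_window:
  assumes P: "pers_obj D L P" and Q: "pers_obj D L Q" and g: "pers_mor D L P Q g"
    and iso: "\<And>p. p \<le> lo \<or> hi < p \<Longrightarrow> is_iso D (snd P p) \<and> is_iso D (snd Q p)"
    and zero: "\<And>p. lo \<le> p \<Longrightarrow> p \<le> hi \<Longrightarrow> g p = zr (fst P p) (fst Q p)"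
    and "lo \<le> hi"
  shows "g p = zr (fst P p) (fst Q p)"
proof -
  have above: "g p = zr (fst P p) (fst Q p)" if "hi \<le> p" for p
    using that
  proof (induction p rule: int_ge_induct)
    case base then show ?case using zero \<open>lo \<le> hi\<close> by simp
  next
    case (step i)
    then show ?case using pers_mor_zero_step_up[OF P Q g, of "i + 1"] iso[of "i + 1"] by simp
  qed
  have below: "g p = zr (fst P p) (fst Q p)" if "p \<le> lo" for p
    using that
  proof (induction p rule: int_le_induct)
    case base then show ?case using zero \<open>lo \<le> hi\<close> by simp
  next
    case (step i)
    then show ?case using pers_mor_zero_step_down[OF P Q g, of i] iso[of i] by simp
  qed
  show ?thesis using above below zero by (meson linear)
qed

text \<open>
  Transporting a morphism \<open>x : U \<rightarrow> V\<close> that intertwines idempotents \<open>E\<^sub>U\<close>, \<open>E\<^sub>V\<close> to the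
  objects through which they split.
\<close>

lemma split_transfer:
  assumes x: "x \<in> Hom U V" and EU: "EU \<in> Hom U U" and EV: "EV \<in> Hom V V" and c: "cmp EV x = cmp x EU"
    and kU: "kU \<in> Hom KU U" "rU \<in> Hom U KU" "cmp rU kU = idm KU" "cmp kU rU = EU"
    and kV: "kV \<in> Hom KV V" "rV \<in> Hom V KV" "cmp rV kV = idm KV" "cmp kV rV = EV"
  shows "cmp rV (cmp x kU) \<in> Hom KU KV"
    "cmp kV (cmp rV (cmp x kU)) = cmp x kU"
    "cmp rV x = cmp (cmp rV (cmp x kU)) rU"
proof -
  have xk: "cmp x kU \<in> Hom KU V" using comp_hom[OF kU(1) x] .
  show "cmp rV (cmp x kU) \<in> Hom KU KV" using comp_hom[OF xk kV(2)] .
  note sU = split_idempotent_absorbs[OF kU] and sV = split_idempotent_absorbs[OF kV]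
  have "cmp kV (cmp rV (cmp x kU)) = cmp (cmp EV x) kU"
    using assoc[OF xk kV(2) kV(1)] kV(4) assoc[OF kU(1) x EV] by simp
  also have "\<dots> = cmp x kU" using c assoc[OF kU(1) EU x] sU(1) by simp
  finally show "cmp kV (cmp rV (cmp x kU)) = cmp x kU" .
  have "cmp (cmp rV (cmp x kU)) rU = cmp rV (cmp x EU)"
    using assoc[OF kU(2) xk kV(2)] assoc[OF kU(2) kU(1) x] kU(4) by simp
  also have "\<dots> = cmp rV x" using c[symmetric] assoc[OF x EV kV(2)] sV(2) by simp
  finally show "cmp rV x = cmp (cmp rV (cmp x kU)) rU" by simp
qed

lemma split_transfer_iso:
  assumes x: "x \<in> Hom U V" "is_iso D x" and EU: "EU \<in> Hom U U" and EV: "EV \<in> Hom V V"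
    and c: "cmp EV x = cmp x EU"
    and kU: "kU \<in> Hom KU U" "rU \<in> Hom U KU" "cmp rU kU = idm KU" "cmp kU rU = EU"
    and kV: "kV \<in> Hom KV V" "rV \<in> Hom V KV" "cmp rV kV = idm KV" "cmp kV rV = EV"
  shows "is_iso D (cmp rV (cmp x kU))"
proof -
  define a where "a = cmp rV (cmp x kU)"
  note tr = split_transfer[OF x(1) EU EV c kU kV, folded a_def]
  obtain y where y: "y \<in> Hom V U" "cmp y x = idm U" "cmp x y = idm V" using is_iso_iff[OF x(1)] x(2) by blast
  have EUy: "cmp EU y = cmp y EV"
  proof -
    have yE: "cmp EU y \<in> Hom V U" using comp_hom[OF y(1) EU] .
    have "cmp EU y = cmp y (cmp (cmp x EU) y)"
      using y(2) id_comp[OF yE] assoc[OF yE x(1) y(1)] assoc[OF y(1) EU x(1)] by simp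
    also have "\<dots> = cmp y EV" using c assoc[OF y(1) x(1) EV] y(3) comp_id[OF EV] by simp
    finally show ?thesis .
  qed
  define b where "b = cmp rU (cmp y kV)"
  have yk: "cmp y kV \<in> Hom KV U" using comp_hom[OF kV(1) y(1)] .
  have bH: "b \<in> Hom KV KU" unfolding b_def using comp_hom[OF yk kU(2)] .
  have "cmp b a = cmp rU (cmp y (cmp kV a))"
    unfolding b_def using assoc[OF tr(1) yk kU(2)] assoc[OF tr(1) kV(1) y(1)] by simp
  also have "\<dots> = idm KU"
    using tr(2) assoc[OF kU(1) x(1) y(1)] y(2) id_comp[OF kU(1)] kU(3) by simp
  finally have ba: "cmp b a = idm KU" .
  have "cmp kU b = cmp (cmp EU y) kV"
    unfolding b_def using assoc[OF yk kU(2) kU(1)] kU(4) assoc[OF kV(1) y(1) EU] by simp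
  also have "\<dots> = cmp y kV"
    using EUy assoc[OF kV(1) EV y(1)] split_idempotent_absorbs[OF kV] by simp
  finally have kUb: "cmp kU b = cmp y kV" .
  have "cmp a b = cmp rV (cmp x (cmp kU b))"
    unfolding a_def using assoc[OF bH comp_hom[OF kU(1) x(1)] kV(2)] assoc[OF bH kU(1) x(1)] by simp
  also have "\<dots> = idm KV"
    using kUb assoc[OF kV(1) y(1) x(1)] y(3) id_comp[OF kV(1)] kV(3) by simp
  finally have "cmp a b = idm KV" .
  then show ?thesis using is_iso_iff[OF tr(1)] bH ba unfolding a_def by blast
qed

lemma poly_eval_Pers:
  assumes X: "X \<in> cObj (Pers L)" and f: "pers_mor D L X X F"
  shows "poly_eval (Pers L) X q (X, X, F) = (X, X, \<lambda>p. poly_eval D (fst X p) q (F p))"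
proof -
  interpret T: linear_cat "Pers L" by (rule linear_cat_Pers)
  have fH: "(X, X, F) \<in> hom (Pers L) X X" using X f by (auto simp: hom_Pers_iff)
  have PX: "pers_obj D L X" using X by simp
  show ?thesis
  proof (induction q)
    case 0 then show ?case by simp
  next
    case (pCons a q)
    show ?case using T.poly_eval_pCons[OF X fH] pCons
      by (simp add: poly_eval_pCons[OF pers_obj_ob[OF PX] pers_mor_hom[OF f]])
  qed
qed

lemma pers_split_if_pointwise_split:
  assumes X: "pers_obj D L X" "tempered D X" and E: "pers_mor D L X X E"
    and S: "\<And>p. K p \<in> Ob" "\<And>p. k p \<in> Hom (K p) (fst X p)" "\<And>p. r p \<in> Hom (fst X p) (K p)"
      "\<And>p. cmp (r p) (k p) = idm (K p)" "\<And>p. cmp (k p) (r p) = E p"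
  defines "a \<equiv> \<lambda>p. if p \<in> L then cmp (r (p - 1)) (cmp (snd X p) (k p))
                    else cmp (r p) (cmp (snd X p) (k (p - 1)))"
  shows "pers_obj D L (K, a)" "tempered D (K, a)" "pers_mor D L (K, a) X k" "pers_mor D L X (K, a) r"
proof -
  have aL: "a p \<in> Hom (K p) (K (p - 1))" "cmp (k (p - 1)) (a p) = cmp (snd X p) (k p)"
    "cmp (r (p - 1)) (snd X p) = cmp (a p) (r p)" if "p \<in> L" for p
    using split_transfer[OF pers_obj_map_L[OF X(1) that] pers_mor_hom[OF E] pers_mor_hom[OF E]
        pers_mor_L[OF E that] S(2-5) S(2-5)] that
    by (simp_all add: a_def)
  have aN: "a p \<in> Hom (K (p - 1)) (K p)" "cmp (k p) (a p) = cmp (snd X p) (k (p - 1))"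
    "cmp (r p) (snd X p) = cmp (a p) (r (p - 1))" if "p \<notin> L" for p
    using split_transfer[OF pers_obj_map_notL[OF X(1) that] pers_mor_hom[OF E] pers_mor_hom[OF E]
        pers_mor_notL[OF E that] S(2-5) S(2-5)] that
    by (simp_all add: a_def)
  have "is_iso D (a p)" if "is_iso D (snd X p)" for p
  proof (cases "p \<in> L")
    case True
    then show ?thesis using split_transfer_iso[OF pers_obj_map_L[OF X(1) True] that pers_mor_hom[OF E]
        pers_mor_hom[OF E] pers_mor_L[OF E True] S(2-5) S(2-5)] by (simp add: a_def)
  next
    case False
    then show ?thesis using split_transfer_iso[OF pers_obj_map_notL[OF X(1) False] that pers_mor_hom[OF E]
        pers_mor_hom[OF E] pers_mor_notL[OF E False] S(2-5) S(2-5)] by (simp add: a_def)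
  qed
  then have "{p. \<not> is_iso D (a p)} \<subseteq> {p. \<not> is_iso D (snd X p)}" by blast
  then show "tempered D (K, a)" using X(2) unfolding tempered_def by (auto intro: finite_subset)
  show "pers_obj D L (K, a)" unfolding pers_obj_def using S(1) aL(1) aN(1) by auto
  show "pers_mor D L (K, a) X k" by (rule pers_morI) (use S(2) aL aN in auto)
  show "pers_mor D L X (K, a) r" by (rule pers_morI) (use S(3) aL aN in auto)
qed

lemma idems_split_Pers:
  assumes "idems_split D"
  shows "idems_split (Pers L)"
  unfolding idems_split_def
proof (intro ballI impI)
  fix X e assume X: "X \<in> cObj (Pers L)" and eH: "e \<in> hom (Pers L) X X" and ee: "cComp (Pers L) e e = e"
  obtain E where e: "e = (X, X, E)" and E: "pers_mor D L X X E" using eH by (auto simp: hom_Pers_iff)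
  have PX: "pers_obj D L X" "tempered D X" using X by auto
  have "cmp (E p) (E p) = E p" for p using ee e by (simp add: fun_eq_iff)
  then have "\<forall>p. \<exists>t. fst t \<in> Ob \<and> fst (snd t) \<in> Hom (fst t) (fst X p) \<and> snd (snd t) \<in> Hom (fst X p) (fst t) \<and>
      cmp (snd (snd t)) (fst (snd t)) = idm (fst t) \<and> cmp (fst (snd t)) (snd (snd t)) = E p"
    using assms pers_obj_ob[OF PX(1)] pers_mor_hom[OF E] unfolding idems_split_def by fastforce
  then obtain t where t: "\<forall>p. fst (t p) \<in> Ob \<and> fst (snd (t p)) \<in> Hom (fst (t p)) (fst X p) \<and>
      snd (snd (t p)) \<in> Hom (fst X p) (fst (t p)) \<and>
      cmp (snd (snd (t p))) (fst (snd (t p))) = idm (fst (t p)) \<and> cmp (fst (snd (t p))) (snd (snd (t p))) = E p"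
    by (rule choice[THEN exE])
  define K k r where "K p = fst (t p)" "k p = fst (snd (t p))" "r p = snd (snd (t p))" for p
  have S: "\<And>p. K p \<in> Ob" "\<And>p. k p \<in> Hom (K p) (fst X p)"
    "\<And>p. r p \<in> Hom (fst X p) (K p)" "\<And>p. cmp (r p) (k p) = idm (K p)" "\<And>p. cmp (k p) (r p) = E p"
    using t unfolding K_k_r_def by auto
  note A = pers_split_if_pointwise_split[OF PX E S]
  define A where "A = (K, \<lambda>p. if p \<in> L then cmp (r (p - 1)) (cmp (snd X p) (k p))
                    else cmp (r p) (cmp (snd X p) (k (p - 1))))"
  have "A \<in> cObj (Pers L)" "(A, X, k) \<in> hom (Pers L) A X" "(X, A, r) \<in> hom (Pers L) X A"
    using A X by (auto simp: hom_Pers_iff A_def)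
  moreover have "cComp (Pers L) (X, A, r) (A, X, k) = cId (Pers L) A"
    "cComp (Pers L) (A, X, k) (X, A, r) = e"
    using S(4,5) e by (simp_all add: A_def fun_eq_iff)
  ultimately show "\<exists>A \<iota> \<pi>. A \<in> cObj (Pers L) \<and> \<iota> \<in> hom (Pers L) A X \<and> \<pi> \<in> hom (Pers L) X A \<and>
      cComp (Pers L) \<pi> \<iota> = cId (Pers L) A \<and> cComp (Pers L) \<iota> \<pi> = e" by blast
qed

lemma orth_idems_Pers_component:
  assumes oe: "orth_idems (Pers L) X K e" and ek: "\<And>k. k \<in> K \<Longrightarrow> e k = (X, X, E k)"
  shows "orth_idems D (fst X p) {k \<in> K. E k p \<noteq> zr (fst X p) (fst X p)} (\<lambda>k. E k p)"
proof -
  have "E k p \<in> Hom (fst X p) (fst X p)" if "k \<in> K" for k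
  proof -
    have "e k \<in> hom (Pers L) X X" using oe that unfolding orth_idems_def by blast
    then have "pers_mor D L X X (E k)" using ek[OF that] by (auto simp: hom_Pers_iff)
    then show ?thesis by (rule pers_mor_hom)
  qed
  moreover have "cmp (E k p) (E k p) = E k p" if "k \<in> K" for k
  proof -
    have "cComp (Pers L) (e k) (e k) = e k" using oe that unfolding orth_idems_def by blast
    then show ?thesis using ek[OF that] by (simp add: fun_eq_iff)
  qed
  moreover have "cmp (E j p) (E k p) = zr (fst X p) (fst X p)" if "j \<in> K" "k \<in> K" "j \<noteq> k" for j k
  proof -
    have "cComp (Pers L) (e j) (e k) = cZero (Pers L) X X" using oe that unfolding orth_idems_def by blast
    then show ?thesis using ek that by (simp add: fun_eq_iff)
  qed
  ultimately show ?thesis unfolding orth_idems_def by auto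
qed

text \<open>A nonzero idempotent is nonzero at some index of the window, where it is counted by the bound for that component.\<close>

lemma orth_idems_bounded_Pers:
  assumes bd: "orth_idems_bounded D"
  shows "orth_idems_bounded (Pers L)"
  unfolding orth_idems_bounded_def
proof
  fix X assume X: "X \<in> cObj (Pers L)"
  have PX: "pers_obj D L X" and TX: "tempered D X" using X by auto
  obtain lo hi where lh: "lo \<le> hi" and iso: "\<And>p. p \<le> lo \<or> hi < p \<Longrightarrow> is_iso D (snd X p)"
    using tempered_window[OF TX] by blast
  have "\<forall>p. \<exists>N. \<forall>K e. finite K \<longrightarrow> orth_idems D (fst X p) K e \<longrightarrow> card K \<le> N"
    using bd pers_obj_ob[OF PX] unfolding orth_idems_bounded_def by blast
  from choice[OF this] obtain N where N: "\<forall>p K e. finite K \<longrightarrow> orth_idems D (fst X p) K e \<longrightarrow> card K \<le> N p"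
    by blast
  have "card K \<le> (\<Sum>p\<in>{lo..hi}. N p)" if K: "finite K" and oe: "orth_idems (Pers L) X K e" for K e
  proof -
    define E where "E k = snd (snd (e k))" for k
    have ek: "e k = (X, X, E k)" "pers_mor D L X X (E k)" if "k \<in> K" for k
      using oe that unfolding orth_idems_def E_def by (auto simp: hom_Pers_iff)
    define Kp where "Kp p = {k \<in> K. E k p \<noteq> zr (fst X p) (fst X p)}" for p
    have "\<exists>p\<in>{lo..hi}. k \<in> Kp p" if k: "k \<in> K" for k
    proof (rule ccontr)
      assume "\<not> (\<exists>p\<in>{lo..hi}. k \<in> Kp p)"
      then have "E k p = zr (fst X p) (fst X p)" for p
        using pers_mor_zero_if_zero_on_window[OF PX PX ek(2)[OF k] _ _ lh] iso k by (auto simp: Kp_def)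
      then have "e k = cZero (Pers L) X X" using ek[OF k] by (simp add: fun_eq_iff)
      with oe k show False unfolding orth_idems_def by blast
    qed
    then have "card K \<le> card (\<Union>p\<in>{lo..hi}. Kp p)" by (intro card_mono) (auto simp: Kp_def K)
    also have "\<dots> \<le> (\<Sum>p\<in>{lo..hi}. card (Kp p))" by (rule card_UN_le) simp
    also have "\<dots> \<le> (\<Sum>p\<in>{lo..hi}. N p)"
    proof (rule sum_mono)
      fix p
      have "finite (Kp p)" using K by (simp add: Kp_def)
      then show "card (Kp p) \<le> N p"
        using N orth_idems_Pers_component[OF oe ek(1)] unfolding Kp_def by blast
    qed
    finally show ?thesis .
  qed
  then show "\<exists>N. \<forall>K e. finite K \<longrightarrow> orth_idems (Pers L) X K e \<longrightarrow> card K \<le> N" by blast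
qed

text \<open>The product of annihilating polynomials of the components in the window annihilates everywhere.\<close>

lemma endos_algebraic_Pers:
  assumes alg: "endos_algebraic D"
  shows "endos_algebraic (Pers L)"
  unfolding endos_algebraic_def
proof (intro ballI)
  fix X f assume X: "X \<in> cObj (Pers L)" and fH: "f \<in> hom (Pers L) X X"
  interpret T: linear_cat "Pers L" by (rule linear_cat_Pers)
  obtain F where f: "f = (X, X, F)" and F: "pers_mor D L X X F" using fH by (auto simp: hom_Pers_iff)
  have PX: "pers_obj D L X" and TX: "tempered D X" using X by auto
  obtain lo hi where lh: "lo \<le> hi" and iso: "\<And>p. p \<le> lo \<or> hi < p \<Longrightarrow> is_iso D (snd X p)"
    using tempered_window[OF TX] by blast
  have "\<forall>p. \<exists>P. P \<noteq> 0 \<and> poly_eval D (fst X p) P (F p) = zr (fst X p) (fst X p)"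
    using alg pers_obj_ob[OF PX] pers_mor_hom[OF F] unfolding endos_algebraic_def by blast
  from choice[OF this] obtain Pf
    where Pf: "\<And>p. Pf p \<noteq> 0" "\<And>p. poly_eval D (fst X p) (Pf p) (F p) = zr (fst X p) (fst X p)"
    by blast
  define P where "P = (\<Prod>p\<in>{lo..hi}. Pf p)"
  have "P \<noteq> 0" unfolding P_def using Pf by (simp add: prod_zero_iff)
  have window: "poly_eval D (fst X p) P (F p) = zr (fst X p) (fst X p)" if "lo \<le> p" "p \<le> hi" for p
  proof -
    have Xp: "fst X p \<in> Ob" using pers_obj_ob[OF PX] .
    have "P = Pf p * (\<Prod>q\<in>{lo..hi} - {p}. Pf q)" unfolding P_def using that by (simp add: prod.remove)
    then show ?thesis using Pf(2) poly_eval_mult[OF Xp pers_mor_hom[OF F]]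
        zero_comp[OF poly_eval_hom[OF Xp pers_mor_hom[OF F]] Xp] by simp
  qed
  have "poly_eval (Pers L) X P f \<in> hom (Pers L) X X" using T.poly_eval_hom[OF X fH] .
  then have "pers_mor D L X X (\<lambda>p. poly_eval D (fst X p) P (F p))"
    using poly_eval_Pers[OF X F] f by (auto simp: hom_Pers_iff)
  from pers_mor_zero_if_zero_on_window[OF PX PX this _ window lh]
  have "poly_eval (Pers L) X P f = cZero (Pers L) X X"
    using poly_eval_Pers[OF X F] f iso by (simp add: fun_eq_iff)
  then show "\<exists>P. P \<noteq> 0 \<and> poly_eval (Pers L) X P f = cZero (Pers L) X X" using \<open>P \<noteq> 0\<close> by blast
qed

end

theorem proposition5p2:
  fixes C :: "('o, 'm, 'k::field) lcat" and L :: "int set"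
  assumes "linear_abelian_cat C"
  shows "krull_schmidt (tempered_pers_cat C L)"
proof -
  interpret C: fd_linear_cat C
    using linear_cat_if_linear_abelian[OF assms] assms
    unfolding fd_linear_cat_def fd_linear_cat_axioms_def linear_abelian_cat_def by blast
  have "idems_split C"
    using C.idems_split_if_kernels assms unfolding linear_abelian_cat_def by blast
  interpret T: linear_cat "tempered_pers_cat C L" by (rule C.linear_cat_Pers)
  show ?thesis
    by (rule T.krull_schmidt_criterion[OF C.idems_split_Pers[OF \<open>idems_split C\<close>]
          C.orth_idems_bounded_Pers[OF C.orth_idems_bounded] C.endos_algebraic_Pers[OF C.endos_algebraic]])
qed

end
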